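(* Let $n\geq 2$. On $\mathfrak{sl}_{n+1}(\mathbb C)$ with commutator bracket, let $\langle X,Y\rangle=\operatorname{tr}(XY^* )$. Embed $\mathfrak{sl}_n(\mathbb C)$ as the upper-left $n\times n$ block, let $I=\sqrt{\tfrac{1}{n(n+1)}}\begin{pmatrix}\mathrm{id}_n&0\\0&-n\end{pmatrix}$ and $\mathfrak s=\operatorname{span}_{\mathbb C}\{e_{i(n+1)},e_{(n+1)i}:1\le i\le n\}$ ($e_{ij}$ the elementary matrices), so that $\mathfrak{sl}_{n+1}(\mathbb C)=\mathfrak{sl}_n(\mathbb C)\oplus\mathbb CI\oplus\mathfrak s$ orthogonally. For $x,y,z>0$ let $\sigma_{x,y,z}=x^{-1}\mathrm{id}_{\mathfrak{sl}_n(\mathbb C)}+y^{-1}\mathrm{id}_{\mathbb CI}+z^{-1}\mathrm{id}_{\mathfrak s}$ and let $P_{x,y,z}$ be the torsion-twisted Chern--Ricci operator of the Hermitian inner product $\langle\sigma_{x,y,z}\cdot,\cdot\rangle$ on $(\mathfrak{sl}_{n+1}(\mathbb C),[\cdot,\cdot])$. Then for all $x,y,z>0$, \[P_{x,y,z}=\Big(nx+\frac{z^2}{x}\Big)\mathrm{id}_{\mathfrak{sl}_n(\mathbb C)}+(n+1)\frac{z^2}{y}\mathrm{id}_{\mathbb CI}+\frac{n+1}{n}\big((n-1)x+y\big)\mathrm{id}_{\mathfrak s}.\]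
   Context: For a complex Lie algebra $(\mathfrak g,\mu)$ with Hermitian inner product $g$, the torsion-twisted Chern--Ricci operator $P^g_\mu$ is the $g$-Hermitian endomorphism defined by $g(P^g_\mu X,X)=\sum_{i<j}|g(\mu(e_i,e_j),X)|^2$ for any $g$-unitary complex basis $\{e_i\}$; equivalently $P^g_\mu=\tfrac12\sum_i\operatorname{ad}_{e_i}\circ\operatorname{ad}_{e_i}^*$ with adjoint taken w.r.t. $g$. It satisfies $g(P\cdot,\cdot)=\Theta(g)$, the torsion-twisted Chern--Ricci form of the corresponding left-invariant metric. *)

theory Defs
  imports Complex_Main
begin

text \<open>Complex matrices are modelled as functions nat => nat => complex; an N x N matrix
  is one whose entries vanish outside the index range {0..<N} x {0..<N} (0-based indices,
  so the paper's index n+1 is our index n).\<close>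

type_synonym cmat = "nat \<Rightarrow> nat \<Rightarrow> complex"

definition mzero :: cmat where "mzero = (\<lambda>i j. 0)"
definition madd :: "cmat \<Rightarrow> cmat \<Rightarrow> cmat" where "madd X Y = (\<lambda>i j. X i j + Y i j)"
definition msc :: "complex \<Rightarrow> cmat \<Rightarrow> cmat" where "msc a X = (\<lambda>i j. a * X i j)"

definition mat_space :: "nat \<Rightarrow> cmat set" where
  "mat_space N = {M. \<forall>i j. (N \<le> i \<or> N \<le> j) \<longrightarrow> M i j = 0}"

definition sl :: "nat \<Rightarrow> cmat set" where
  "sl N = {M \<in> mat_space N. (\<Sum>i<N. M i i) = 0}"

definition comm :: "nat \<Rightarrow> cmat \<Rightarrow> cmat \<Rightarrow> cmat" where
  "comm N X Y = (\<lambda>i j. (\<Sum>k<N. X i k * Y k j) - (\<Sum>k<N. Y i k * X k j))"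

definition frob :: "nat \<Rightarrow> cmat \<Rightarrow> cmat \<Rightarrow> complex" where
  "frob N X Y = (\<Sum>i<N. \<Sum>j<N. X i j * cnj (Y i j))"

definition unitary_basis ::
  "cmat set \<Rightarrow> (cmat \<Rightarrow> cmat \<Rightarrow> complex) \<Rightarrow> (nat \<Rightarrow> cmat) \<Rightarrow> nat \<Rightarrow> bool" where
  "unitary_basis V g es d \<longleftrightarrow>
     (\<forall>i<d. es i \<in> V) \<and>
     (\<forall>i<d. \<forall>j<d. g (es i) (es j) = (if i = j then 1 else 0)) \<and>
     (\<forall>X\<in>V. \<exists>a::nat \<Rightarrow> complex. X = (\<lambda>p q. \<Sum>i<d. a i * es i p q))"

text \<open>Defining property of the torsion-twisted Chern--Ricci operator P of (V, mu, g):
  P is a g-Hermitian (complex-linear) endomorphism of V with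
  g(P X, X) = sum_{i<j} |g(mu(e_i,e_j),X)|^2 for any g-unitary basis.\<close>
definition is_ttcr ::
  "cmat set \<Rightarrow> (cmat \<Rightarrow> cmat \<Rightarrow> complex) \<Rightarrow> (cmat \<Rightarrow> cmat \<Rightarrow> cmat) \<Rightarrow> (cmat \<Rightarrow> cmat) \<Rightarrow> bool" where
  "is_ttcr V g mu P \<longleftrightarrow>
     (\<forall>X\<in>V. P X \<in> V) \<and>
     (\<forall>X\<in>V. \<forall>Y\<in>V. \<forall>a b. P (madd (msc a X) (msc b Y)) = madd (msc a (P X)) (msc b (P Y))) \<and>
     (\<forall>X\<in>V. \<forall>Y\<in>V. g (P X) Y = g X (P Y)) \<and>
     (\<forall>es d. unitary_basis V g es d \<longrightarrow>
        (\<forall>X\<in>V. g (P X) X =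
           complex_of_real (\<Sum>i<d. \<Sum>j\<in>{i<..<d}. (cmod (g (mu (es i) (es j)) X))\<^sup>2)))"

definition ttcr ::
  "cmat set \<Rightarrow> (cmat \<Rightarrow> cmat \<Rightarrow> complex) \<Rightarrow> (cmat \<Rightarrow> cmat \<Rightarrow> cmat) \<Rightarrow> cmat \<Rightarrow> cmat" where
  "ttcr V g mu = (THE P. is_ttcr V g mu P \<and> (\<forall>X. X \<notin> V \<longrightarrow> P X = mzero))"

definition Imat :: "nat \<Rightarrow> cmat" where
  "Imat n = (\<lambda>i j. if i = j \<and> i < n then complex_of_real (sqrt (1 / (real n * (real n + 1))))
                   else if i = j \<and> i = n then - of_nat n * complex_of_real (sqrt (1 / (real n * (real n + 1))))
                   else 0)"

definition prI :: "nat \<Rightarrow> cmat \<Rightarrow> cmat" where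
  "prI n X = msc (frob (n+1) X (Imat n)) (Imat n)"

definition prS :: "nat \<Rightarrow> cmat \<Rightarrow> cmat" where
  "prS n X = (\<lambda>i j. if (i < n \<and> j = n) \<or> (i = n \<and> j < n) then X i j else 0)"

definition prSl :: "nat \<Rightarrow> cmat \<Rightarrow> cmat" where
  "prSl n X = (\<lambda>i j. if i < n \<and> j < n then X i j - prI n X i j else 0)"

definition block_op :: "nat \<Rightarrow> real \<Rightarrow> real \<Rightarrow> real \<Rightarrow> cmat \<Rightarrow> cmat" where
  "block_op n a b c X =
     madd (madd (msc (of_real a) (prSl n X)) (msc (of_real b) (prI n X))) (msc (of_real c) (prS n X))"

definition sigma :: "nat \<Rightarrow> real \<Rightarrow> real \<Rightarrow> real \<Rightarrow> cmat \<Rightarrow> cmat" where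
  "sigma n x y z = block_op n (1/x) (1/y) (1/z)"

definition gxyz :: "nat \<Rightarrow> real \<Rightarrow> real \<Rightarrow> real \<Rightarrow> cmat \<Rightarrow> cmat \<Rightarrow> complex" where
  "gxyz n x y z X Y = frob (n+1) (sigma n x y z X) Y"

end

theory Submission
  imports Defs
begin

text \<open>Polarization shows that a g-Hermitian operator is determined by its quadratic
  form X \<mapsto> g(P X, X) once g is positive definite and V has a g-unitary basis; for
  sl_{n+1} such a basis consists of rescaled off-diagonal elementary matrices and rescaled
  Helmert vectors on the diagonal. So it suffices to show that the block operator Q of the
  statement satisfies g(Q X, X) = sum_{i<j} |g([e_i, e_j], X)|^2. The right-hand side is half
  the full double sum, and a double sum of squared moduli of a sesquilinear expression takes
  the same value over a unitary basis and over any Parseval frame. Over the overcomplete frame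
  sqrt x (E_pq - delta_pq id_n / n), sqrt y I, sqrt z E_{p,n+1}, sqrt z E_{n+1,p} every bracket
  of two frame vectors is a combination of elementary matrices, and the double sum becomes an
  explicit quadratic expression in the entries of X, namely 2 g(Q X, X).\<close>

section \<open>Hermitian forms, unitary bases and Parseval frames\<close>

definition lincomb :: "(nat \<Rightarrow> complex) \<Rightarrow> (nat \<Rightarrow> cmat) \<Rightarrow> nat \<Rightarrow> cmat" where
  "lincomb a E d = (\<lambda>p q. \<Sum>i<d. a i * E i p q)"

definition cmat_subspace :: "cmat set \<Rightarrow> bool" where
  "cmat_subspace V \<longleftrightarrow> mzero \<in> V \<and> (\<forall>X\<in>V. \<forall>Y\<in>V. \<forall>a b. madd (msc a X) (msc b Y) \<in> V)"

definition linear_on :: "cmat set \<Rightarrow> (cmat \<Rightarrow> complex) \<Rightarrow> bool" where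
  "linear_on V \<phi> \<longleftrightarrow> (\<forall>X\<in>V. \<forall>Y\<in>V. \<forall>a b. \<phi> (madd (msc a X) (msc b Y)) = a * \<phi> X + b * \<phi> Y)"

definition hermitian_form_on :: "cmat set \<Rightarrow> (cmat \<Rightarrow> cmat \<Rightarrow> complex) \<Rightarrow> bool" where
  "hermitian_form_on V g \<longleftrightarrow> (\<forall>W\<in>V. linear_on V (\<lambda>X. g X W)) \<and> (\<forall>X\<in>V. \<forall>W\<in>V. g W X = cnj (g X W))"

definition parseval_frame :: "cmat set \<Rightarrow> (cmat \<Rightarrow> cmat \<Rightarrow> complex) \<Rightarrow> ('a \<Rightarrow> cmat) \<Rightarrow> 'a set \<Rightarrow> bool" where
  "parseval_frame V g b L \<longleftrightarrow> finite L \<and> (\<forall>l\<in>L. b l \<in> V) \<and>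
     (\<forall>W\<in>V. g W W = of_real (\<Sum>l\<in>L. (cmod (g (b l) W))\<^sup>2))"

lemma lincomb_0: "lincomb a E 0 = mzero"
  by (simp add: lincomb_def mzero_def)

lemma lincomb_Suc: "lincomb a E (Suc d) = madd (msc 1 (lincomb a E d)) (msc (a d) (E d))"
  by (simp add: lincomb_def madd_def msc_def)

lemma lincomb_in_subspace:
  assumes "cmat_subspace V" and "\<forall>i<d. E i \<in> V"
  shows "lincomb a E d \<in> V"
  using assms(2)
  by (induction d) (use assms(1) in \<open>auto simp: cmat_subspace_def lincomb_0 lincomb_Suc\<close>)

lemma linear_on_mzero:
  assumes "cmat_subspace V" and "linear_on V \<phi>"
  shows "\<phi> mzero = 0"
proof -
  have "mzero \<in> V" and "madd (msc 0 mzero) (msc 0 mzero) = mzero"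
    using assms(1) by (auto simp: cmat_subspace_def madd_def msc_def mzero_def)
  then have "\<phi> mzero = 0 * \<phi> mzero + 0 * \<phi> mzero"
    using assms(2) unfolding linear_on_def by metis
  then show ?thesis by simp
qed

lemma linear_on_lincomb:
  assumes V: "cmat_subspace V" and \<phi>: "linear_on V \<phi>" and E: "\<forall>i<d. E i \<in> V"
  shows "\<phi> (lincomb a E d) = (\<Sum>i<d. a i * \<phi> (E i))"
  using E
proof (induction d)
  case 0
  show ?case using linear_on_mzero[OF V \<phi>] by (simp add: lincomb_0)
next
  case (Suc d)
  have "lincomb a E d \<in> V" using lincomb_in_subspace[OF V] Suc.prems by simp
  then show ?case
    using \<phi> Suc by (simp add: lincomb_Suc linear_on_def)
qed

lemma hermitian_form_on_antilinear:
  assumes "cmat_subspace V" and "hermitian_form_on V g" and "X \<in> V"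
  shows "linear_on V (\<lambda>W. cnj (g X W))"
  unfolding linear_on_def
proof (intro ballI allI)
  fix Y Z a b assume "Y \<in> V" "Z \<in> V"
  moreover have "W \<in> V \<Longrightarrow> cnj (g X W) = g W X" for W
    using assms unfolding hermitian_form_on_def by (metis complex_cnj_cnj)
  moreover have "linear_on V (\<lambda>W. g W X)" using assms unfolding hermitian_form_on_def by blast
  moreover have "madd (msc a Y) (msc b Z) \<in> V"
    using assms(1) \<open>Y \<in> V\<close> \<open>Z \<in> V\<close> unfolding cmat_subspace_def by blast
  ultimately show "cnj (g X (madd (msc a Y) (msc b Z))) = a * cnj (g X Y) + b * cnj (g X Z)"
    unfolding linear_on_def by simp
qed

lemma unitary_basis_coeff:
  assumes V: "cmat_subspace V" and g: "hermitian_form_on V g"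
    and ub: "unitary_basis V g e d" and k: "k < d"
  shows "g (lincomb a e d) (e k) = a k"
proof -
  have ev: "\<forall>i<d. e i \<in> V" and on: "\<And>i j. i < d \<Longrightarrow> j < d \<Longrightarrow> g (e i) (e j) = (if i = j then 1 else 0)"
    using ub unfolding unitary_basis_def by blast+
  have "g (lincomb a e d) (e k) = (\<Sum>i<d. a i * g (e i) (e k))"
    using linear_on_lincomb[OF V _ ev] g ev k unfolding hermitian_form_on_def by blast
  also have "\<dots> = (\<Sum>i<d. if i = k then a i else 0)"
    by (rule sum.cong) (auto simp: on k)
  finally show ?thesis using k by simp
qed

lemma unitary_basis_expansion:
  assumes V: "cmat_subspace V" and g: "hermitian_form_on V g"
    and ub: "unitary_basis V g e d" and v: "v \<in> V"
  shows "v = lincomb (\<lambda>i. g v (e i)) e d"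
proof -
  obtain a where va: "v = lincomb a e d"
    using ub v unfolding unitary_basis_def lincomb_def by blast
  then have "k < d \<Longrightarrow> g v (e k) = a k" for k
    using unitary_basis_coeff[OF V g ub] by simp
  then have "lincomb (\<lambda>i. g v (e i)) e d = lincomb a e d"
    unfolding lincomb_def by (intro ext sum.cong) auto
  then show ?thesis using va by simp
qed

lemma unitary_basis_parseval:
  assumes V: "cmat_subspace V" and g: "hermitian_form_on V g"
    and ub: "unitary_basis V g e d" and w: "w \<in> V"
  shows "g w w = of_real (\<Sum>k<d. (cmod (g (e k) w))\<^sup>2)"
proof -
  have ev: "\<forall>i<d. e i \<in> V" using ub unfolding unitary_basis_def by blast
  have "g w w = g (lincomb (\<lambda>i. g w (e i)) e d) w"
    by (simp only: unitary_basis_expansion[OF V g ub w, symmetric])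
  also have "\<dots> = (\<Sum>i<d. g w (e i) * g (e i) w)"
    by (rule linear_on_lincomb[OF V _ ev]) (use g w in \<open>simp add: hermitian_form_on_def\<close>)
  also have "\<dots> = (\<Sum>i<d. of_real ((cmod (g (e i) w))\<^sup>2))"
  proof (rule sum.cong)
    fix i assume "i \<in> {..<d}"
    then have "g w (e i) = cnj (g (e i) w)" using g w ev unfolding hermitian_form_on_def by blast
    then show "g w (e i) * g (e i) w = of_real ((cmod (g (e i) w))\<^sup>2)"
      by (simp add: complex_mult_cnj cmod_def mult.commute)
  qed simp
  finally show ?thesis by simp
qed

text \<open>A linear functional is represented by a vector of V, so by Parseval's identity the
  sum of its squared moduli is the same over a unitary basis and over any Parseval frame.\<close>

lemma parseval_frame_sum_functional:
  assumes V: "cmat_subspace V" and g: "hermitian_form_on V g" and ub: "unitary_basis V g e d"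
    and fr: "parseval_frame V g b L" and \<phi>: "linear_on V \<phi>"
  shows "(\<Sum>i<d. (cmod (\<phi> (e i)))\<^sup>2) = (\<Sum>l\<in>L. (cmod (\<phi> (b l)))\<^sup>2)"
proof -
  have ev: "\<forall>i<d. e i \<in> V" using ub unfolding unitary_basis_def by blast
  have bV: "\<forall>l\<in>L. b l \<in> V" using fr unfolding parseval_frame_def by blast
  define w where "w = lincomb (\<lambda>i. cnj (\<phi> (e i))) e d"
  have wV: "w \<in> V" unfolding w_def by (rule lincomb_in_subspace[OF V ev])
  have rep: "\<phi> v = g v w" if v: "v \<in> V" for v
  proof -
    have "cnj (g v w) = (\<Sum>i<d. cnj (\<phi> (e i)) * cnj (g v (e i)))"
      unfolding w_def using linear_on_lincomb[OF V hermitian_form_on_antilinear[OF V g v] ev] by simp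
    then have "g v w = cnj (\<Sum>i<d. cnj (\<phi> (e i)) * cnj (g v (e i)))"
      by (metis complex_cnj_cnj)
    also have "\<dots> = (\<Sum>i<d. g v (e i) * \<phi> (e i))"
      by (simp add: cnj_sum mult.commute)
    also have "\<dots> = \<phi> (lincomb (\<lambda>i. g v (e i)) e d)"
      using linear_on_lincomb[OF V \<phi> ev] by simp
    also have "\<dots> = \<phi> v" by (simp only: unitary_basis_expansion[OF V g ub v, symmetric])
    finally show ?thesis by simp
  qed
  have "of_real (\<Sum>i<d. (cmod (\<phi> (e i)))\<^sup>2) = (of_real (\<Sum>i<d. (cmod (g (e i) w))\<^sup>2) :: complex)"
    using rep ev by simp
  also have "\<dots> = g w w" using unitary_basis_parseval[OF V g ub wV] by simp
  also have "\<dots> = of_real (\<Sum>l\<in>L. (cmod (g (b l) w))\<^sup>2)" using fr wV unfolding parseval_frame_def by blast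
  also have "\<dots> = of_real (\<Sum>l\<in>L. (cmod (\<phi> (b l)))\<^sup>2)" using rep bV by simp
  finally show ?thesis by (simp only: of_real_eq_iff)
qed

lemma parseval_frame_sum_bilinear:
  assumes V: "cmat_subspace V" and g: "hermitian_form_on V g" and ub: "unitary_basis V g e d"
    and fr: "parseval_frame V g b L"
    and f1: "\<forall>u\<in>V. linear_on V (f u)" and f2: "\<forall>v\<in>V. linear_on V (\<lambda>u. f u v)"
  shows "(\<Sum>i<d. \<Sum>j<d. (cmod (f (e i) (e j)))\<^sup>2) = (\<Sum>k\<in>L. \<Sum>l\<in>L. (cmod (f (b k) (b l)))\<^sup>2)"
proof -
  have ev: "\<forall>i<d. e i \<in> V" using ub unfolding unitary_basis_def by blast
  have bV: "\<forall>l\<in>L. b l \<in> V" using fr unfolding parseval_frame_def by blast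
  note frame_sum = parseval_frame_sum_functional[OF V g ub fr]
  have "(\<Sum>i<d. \<Sum>j<d. (cmod (f (e i) (e j)))\<^sup>2) = (\<Sum>i<d. \<Sum>l\<in>L. (cmod (f (e i) (b l)))\<^sup>2)"
    using f1 ev by (intro sum.cong refl frame_sum) auto
  also have "\<dots> = (\<Sum>l\<in>L. \<Sum>i<d. (cmod (f (e i) (b l)))\<^sup>2)" by (rule sum.swap)
  also have "\<dots> = (\<Sum>l\<in>L. \<Sum>k\<in>L. (cmod (f (b k) (b l)))\<^sup>2)"
    using f2 bV by (intro sum.cong refl frame_sum[where \<phi> = "\<lambda>u. f u _"]) auto
  also have "\<dots> = (\<Sum>k\<in>L. \<Sum>l\<in>L. (cmod (f (b k) (b l)))\<^sup>2)" by (rule sum.swap)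
  finally show ?thesis .
qed

lemma sum_upper_triangle_half:
  fixes h :: "nat \<Rightarrow> nat \<Rightarrow> real"
  assumes sym: "\<And>i j. h i j = h j i" and diag: "\<And>i. h i i = 0"
  shows "(\<Sum>i<d. \<Sum>j\<in>{i<..<d}. h i j) = (\<Sum>i<d. \<Sum>j<d. h i j) / 2"
proof (induction d)
  case (Suc d)
  have "{i<..<Suc d} = insert d {i<..<d}" if "i < d" for i
    using that by auto
  moreover have "{d<..<Suc d} = {}" by auto
  ultimately have "(\<Sum>i<Suc d. \<Sum>j\<in>{i<..<Suc d}. h i j) = (\<Sum>i<d. \<Sum>j\<in>{i<..<d}. h i j) + (\<Sum>i<d. h i d)"
    by (simp add: sum.distrib)
  moreover have "(\<Sum>i<Suc d. \<Sum>j<Suc d. h i j) = (\<Sum>i<d. \<Sum>j<d. h i j) + 2 * (\<Sum>i<d. h i d)"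
    by (simp add: sum.distrib diag sym[of d])
  ultimately show ?case using Suc by simp
qed simp

lemma unitary_basis_bracket_sum:
  assumes V: "cmat_subspace V" and g: "hermitian_form_on V g" and ub: "unitary_basis V g e d"
    and fr: "parseval_frame V g b L"
    and lin1: "\<forall>u\<in>V. linear_on V (\<lambda>v. g (mu u v) X)" and lin2: "\<forall>v\<in>V. linear_on V (\<lambda>u. g (mu u v) X)"
    and anti: "\<And>u v. g (mu u v) X = - g (mu v u) X"
  shows "(\<Sum>i<d. \<Sum>j\<in>{i<..<d}. (cmod (g (mu (e i) (e j)) X))\<^sup>2)
       = (\<Sum>k\<in>L. \<Sum>l\<in>L. (cmod (g (mu (b k) (b l)) X))\<^sup>2) / 2"
proof -
  have "(\<Sum>i<d. \<Sum>j\<in>{i<..<d}. (cmod (g (mu (e i) (e j)) X))\<^sup>2)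
      = (\<Sum>i<d. \<Sum>j<d. (cmod (g (mu (e i) (e j)) X))\<^sup>2) / 2"
  proof (rule sum_upper_triangle_half)
    show "(cmod (g (mu (e i) (e j)) X))\<^sup>2 = (cmod (g (mu (e j) (e i)) X))\<^sup>2" for i j
      by (subst anti) simp
    show "(cmod (g (mu (e i) (e i)) X))\<^sup>2 = 0" for i
      using anti[of "e i" "e i"] by simp
  qed
  also have "\<dots> = (\<Sum>k\<in>L. \<Sum>l\<in>L. (cmod (g (mu (b k) (b l)) X))\<^sup>2) / 2"
    using parseval_frame_sum_bilinear[OF V g ub fr, of "\<lambda>u v. g (mu u v) X"] lin1 lin2 by simp
  finally show ?thesis .
qed

lemma unitary_basis_of_family:
  fixes b :: "'a \<Rightarrow> cmat"
  assumes A: "finite A" and bV: "\<forall>a\<in>A. b a \<in> V"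
    and orth: "\<forall>a\<in>A. \<forall>a'\<in>A. g (b a) (b a') = (if a = a' then 1 else 0)"
    and span: "\<forall>X\<in>V. \<exists>c. X = (\<lambda>p q. \<Sum>a\<in>A. c a * b a p q)"
  shows "\<exists>e d. unitary_basis V g e d"
proof -
  obtain f where f: "bij_betw f {..<card A} A"
    using ex_bij_betw_nat_finite[OF A] atLeast0LessThan by metis
  then have fA: "i < card A \<Longrightarrow> f i \<in> A" for i by (auto dest: bij_betwE)
  have inj: "i < card A \<Longrightarrow> j < card A \<Longrightarrow> f i = f j \<longleftrightarrow> i = j" for i j
    using f by (auto simp: bij_betw_def inj_on_def)
  have "\<exists>c. X = (\<lambda>p q. \<Sum>i<card A. c i * b (f i) p q)" if "X \<in> V" for X
  proof -
    from bspec[OF span that] obtain c where "X = (\<lambda>p q. \<Sum>a\<in>A. c a * b a p q)" ..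
    then have "X = (\<lambda>p q. \<Sum>i<card A. c (f i) * b (f i) p q)"
      by (simp only: sum.reindex_bij_betw[OF f, symmetric])
    then show ?thesis by (rule exI[of _ "\<lambda>i. c (f i)"])
  qed
  moreover have "\<forall>i<card A. \<forall>j<card A. g (b (f i)) (b (f j)) = (if i = j then 1 else 0)"
    using orth fA inj by simp
  ultimately have "unitary_basis V g (\<lambda>i. b (f i)) (card A)"
    unfolding unitary_basis_def using bV fA by blast
  then show ?thesis by blast
qed

lemma sesquilinear_zero_if_quadratic_zero:
  assumes V: "cmat_subspace V"
    and lin: "\<forall>W\<in>V. linear_on V (\<lambda>X. B X W)" and antilin: "\<forall>X\<in>V. linear_on V (\<lambda>W. cnj (B X W))"
    and zero: "\<forall>X\<in>V. B X X = 0" and X: "X \<in> V" and Y: "Y \<in> V"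
  shows "B X Y = 0"
proof -
  have lin': "B (madd (msc a X) (msc c Y)) W = a * B X W + c * B Y W" if "W \<in> V" for a c W
    using lin X Y that unfolding linear_on_def by blast
  have antilin': "B W (madd (msc a X) (msc c Y)) = cnj a * B W X + cnj c * B W Y" if "W \<in> V" for a c W
  proof -
    have "cnj (B W (madd (msc a X) (msc c Y))) = a * cnj (B W X) + c * cnj (B W Y)"
      using antilin X Y that unfolding linear_on_def by blast
    then have "B W (madd (msc a X) (msc c Y)) = cnj (a * cnj (B W X) + c * cnj (B W Y))"
      by (metis complex_cnj_cnj)
    then show ?thesis by simp
  qed
  have comb: "madd (msc a X) (msc c Y) \<in> V" for a c
    using V X Y unfolding cmat_subspace_def by blast
  have "B X X = 0" "B Y Y = 0" using zero X Y by auto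
  then have "B (madd (msc 1 X) (msc a Y)) (madd (msc 1 X) (msc a Y)) = cnj a * B X Y + a * B Y X" for a
    using X Y comb by (simp add: lin' antilin' algebra_simps)
  then have "0 = cnj a * B X Y + a * B Y X" for a
    using zero comb by metis
  from this[of 1] this[of \<i>] have "B X Y + B Y X = 0" and "\<i> * (B Y X - B X Y) = 0"
    by (simp_all add: algebra_simps)
  then show ?thesis by (simp add: algebra_simps)
qed

lemma is_ttcr_unique:
  assumes V: "cmat_subspace V" and g: "hermitian_form_on V g"
    and pos: "\<forall>W\<in>V. g W W = 0 \<longrightarrow> W = mzero" and ub: "unitary_basis V g e d"
    and P: "is_ttcr V g mu P" and Q: "is_ttcr V g mu Q" and X: "X \<in> V"
  shows "P X = Q X"
proof -
  define B where "B U W = g (P U) W - g (Q U) W" for U W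
  have PV: "\<forall>X\<in>V. P X \<in> V" and QV: "\<forall>X\<in>V. Q X \<in> V"
    using P Q unfolding is_ttcr_def by blast+
  have comb: "madd (msc a Y) (msc b Z) \<in> V" if "Y \<in> V" "Z \<in> V" for Y Z a b
    using V that unfolding cmat_subspace_def by blast
  have glin: "g (madd (msc a Y) (msc b Z)) W = a * g Y W + b * g Z W" if "Y \<in> V" "Z \<in> V" "W \<in> V" for Y Z W a b
    using g that unfolding hermitian_form_on_def linear_on_def by blast
  have lin: "\<forall>W\<in>V. linear_on V (\<lambda>X. B X W)"
    using P Q PV QV unfolding linear_on_def is_ttcr_def B_def by (simp add: glin algebra_simps)
  have antilin: "\<forall>X\<in>V. linear_on V (\<lambda>W. cnj (B X W))"
    using hermitian_form_on_antilinear[OF V g] PV QV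
    unfolding B_def linear_on_def by (simp add: algebra_simps)
  have "\<forall>X\<in>V. g (P X) X = of_real (\<Sum>i<d. \<Sum>j\<in>{i<..<d}. (cmod (g (mu (e i) (e j)) X))\<^sup>2)"
    and "\<forall>X\<in>V. g (Q X) X = of_real (\<Sum>i<d. \<Sum>j\<in>{i<..<d}. (cmod (g (mu (e i) (e j)) X))\<^sup>2)"
    using P Q ub unfolding is_ttcr_def by blast+
  then have zero: "\<forall>X\<in>V. B X X = 0"
    unfolding B_def by simp
  define D where "D = madd (msc 1 (P X)) (msc (-1) (Q X))"
  have D: "D \<in> V" unfolding D_def using comb PV QV X by blast
  have "g D D = B X D" unfolding B_def D_def using glin PV QV X D D_def by simp
  also have "\<dots> = 0" by (rule sesquilinear_zero_if_quadratic_zero[OF V lin antilin zero X D])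
  finally have "D = mzero" using pos D by blast
  then have "P X i j - Q X i j = 0" for i j
    using fun_cong[OF fun_cong[OF \<open>D = mzero\<close>, of i], of j] unfolding D_def madd_def msc_def mzero_def by simp
  then show ?thesis by (intro ext) simp
qed

lemma ttcr_eqI:
  assumes V: "cmat_subspace V" and g: "hermitian_form_on V g"
    and pos: "\<forall>W\<in>V. g W W = 0 \<longrightarrow> W = mzero" and ub: "unitary_basis V g e d"
    and Q: "is_ttcr V g mu Q" and Q0: "\<forall>X. X \<notin> V \<longrightarrow> Q X = mzero"
  shows "ttcr V g mu = Q"
  unfolding ttcr_def
proof (rule the_equality)
  show "is_ttcr V g mu Q \<and> (\<forall>X. X \<notin> V \<longrightarrow> Q X = mzero)" using Q Q0 by blast
next
  fix P assume P: "is_ttcr V g mu P \<and> (\<forall>X. X \<notin> V \<longrightarrow> P X = mzero)"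
  show "P = Q"
  proof
    fix X show "P X = Q X"
      using P Q0 is_ttcr_unique[OF V g pos ub _ Q] by (cases "X \<in> V") auto
  qed
qed

section \<open>The inner product in coordinates\<close>

lemma sum_lessThan_plus1:
  fixes f :: "nat \<Rightarrow> 'a::comm_monoid_add"
  shows "(\<Sum>i<n+1. f i) = (\<Sum>i<n. f i) + f n"
  unfolding Suc_eq_plus1[symmetric] by (rule sum.lessThan_Suc)

lemma sum_mult_delta_right:
  fixes f :: "nat \<Rightarrow> complex"
  assumes "finite A"
  shows "(\<Sum>j\<in>A. f j * (if i = j then c else 0)) = (if i \<in> A then f i * c else 0)"
proof -
  have "(\<Sum>j\<in>A. f j * (if i = j then c else 0)) = (\<Sum>j\<in>A. if i = j then f i * c else 0)"
    by (rule sum.cong) auto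
  then show ?thesis using assms by (simp add: sum.delta)
qed

lemma sum_mult_delta_left:
  fixes f :: "nat \<Rightarrow> complex"
  assumes "finite A"
  shows "(\<Sum>j\<in>A. (if i = j then c else 0) * f j) = (if i \<in> A then c * f i else 0)"
proof -
  have "(\<Sum>j\<in>A. (if i = j then c else 0) * f j) = (\<Sum>j\<in>A. if i = j then c * f i else 0)"
    by (rule sum.cong) auto
  then show ?thesis using assms by (simp add: sum.delta)
qed

definition tr_top :: "nat \<Rightarrow> cmat \<Rightarrow> complex" where
  "tr_top n M = (\<Sum>i<n. M i i)"

definition frob_top :: "nat \<Rightarrow> cmat \<Rightarrow> cmat \<Rightarrow> complex" where
  "frob_top n M X = (\<Sum>i<n. \<Sum>j<n. M i j * cnj (X i j))"

definition frob_s :: "nat \<Rightarrow> cmat \<Rightarrow> cmat \<Rightarrow> complex" where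
  "frob_s n M X = (\<Sum>i<n. M i n * cnj (X i n) + M n i * cnj (X n i))"

abbreviation slpart :: "nat \<Rightarrow> cmat \<Rightarrow> nat \<Rightarrow> nat \<Rightarrow> complex" where
  "slpart n W i j \<equiv> W i j - (if i = j then tr_top n W / of_nat n else 0)"

text \<open>On sl_{n+1} the three orthogonal components of X are the trace-free part of its
  upper-left block (entries slpart), the multiple of I determined by its trace, and its
  last row and column; gcoord is the form of gxyz in these coordinates.\<close>

definition gcoord :: "nat \<Rightarrow> real \<Rightarrow> real \<Rightarrow> real \<Rightarrow> cmat \<Rightarrow> cmat \<Rightarrow> complex" where
  "gcoord n x y z M X = of_real (1/x) * (frob_top n M X - tr_top n M * cnj (tr_top n X) / of_nat n)
     + of_real ((real n + 1)/(real n * y)) * (tr_top n M * cnj (tr_top n X)) + of_real (1/z) * frob_s n M X"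

definition icoef :: "nat \<Rightarrow> real" where
  "icoef n = sqrt (1 / (real n * (real n + 1)))"

lemma icoef_sq_complex:
  assumes "n \<ge> 1"
  shows "of_real (icoef n) * of_real (icoef n) * (of_nat n + 1) = (1::complex) / of_nat n"
proof -
  have "icoef n * icoef n * (real n + 1) = 1 / real n"
    using assms unfolding icoef_def by (simp add: real_sqrt_mult_self)
  then have "of_real (icoef n * icoef n * (real n + 1)) = (of_real (1 / real n) :: complex)"
    by simp
  then show ?thesis by simp
qed

lemma Imat_eq: "Imat n i j = (if i = j then (if i < n then of_real (icoef n) else if i = n then - of_nat n * of_real (icoef n) else 0) else 0)"
  unfolding Imat_def icoef_def by auto

lemma sl_last_diag: "M \<in> sl (n+1) \<Longrightarrow> M n n = - tr_top n M"
  unfolding sl_def tr_top_def by (auto simp: sum_lessThan_plus1 add_eq_0_iff)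

lemma sl_outside: "M \<in> sl (n+1) \<Longrightarrow> (n+1 \<le> i \<or> n+1 \<le> j) \<Longrightarrow> M i j = 0"
  unfolding sl_def mat_space_def by blast

lemma sl_iff_tr_top: "M \<in> sl (n+1) \<longleftrightarrow> M \<in> mat_space (n+1) \<and> tr_top n M + M n n = 0"
  unfolding sl_def tr_top_def by simp

lemma madd_msc_in_sl:
  assumes A: "A \<in> sl (n+1)" and B: "B \<in> sl (n+1)"
  shows "madd (msc a A) (msc b B) \<in> sl (n+1)"
proof -
  have "(\<Sum>i<n+1. madd (msc a A) (msc b B) i i) = a * (tr_top n A + A n n) + b * (tr_top n B + B n n)"
    unfolding madd_def msc_def tr_top_def sum_lessThan_plus1 by (simp add: sum.distrib sum_distrib_left algebra_simps)
  also have "\<dots> = 0" using sl_last_diag[OF A] sl_last_diag[OF B] by simp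
  finally show ?thesis using A B unfolding sl_def mat_space_def madd_def msc_def by auto
qed

lemma sl_subspace: "cmat_subspace (sl (n+1))"
  unfolding cmat_subspace_def using madd_msc_in_sl
  by (auto simp: sl_def mat_space_def mzero_def)

lemma frob_cnj: "frob N A B = cnj (frob N B A)"
  unfolding frob_def by (simp add: mult.commute)

lemma frob_madd: "frob N (madd A B) X = frob N A X + frob N B X"
  unfolding frob_def madd_def by (simp add: sum.distrib distrib_right)

lemma frob_msc: "frob N (msc a A) X = a * frob N A X"
  unfolding frob_def msc_def by (simp add: sum_distrib_left mult.assoc)

lemma frob_Imat: "frob (n+1) M (Imat n) = of_real (icoef n) * (tr_top n M - of_nat n * M n n)"
proof -
  have "cnj (Imat n i j) = Imat n i j" for i j
    unfolding Imat_def by simp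
  then have "frob (n+1) M (Imat n) = (\<Sum>i<n+1. M i i * (if i < n then of_real (icoef n) else if i = n then - of_nat n * of_real (icoef n) else 0))"
    unfolding frob_def Imat_eq by (simp add: sum_mult_delta_right del: of_nat_Suc)
  also have "\<dots> = (\<Sum>i<n. M i i * of_real (icoef n)) - M n n * of_nat n * of_real (icoef n)"
    by simp
  finally show ?thesis unfolding tr_top_def sum_distrib_right[symmetric] by (simp add: algebra_simps)
qed

lemma frob_Imat_sl: "M \<in> sl (n+1) \<Longrightarrow> frob (n+1) M (Imat n) = of_real (icoef n) * (of_nat n + 1) * tr_top n M"
  using frob_Imat[of n M] sl_last_diag[of M n] by (simp add: algebra_simps)

lemma frob_prS: "frob (n+1) (prS n M) X = frob_s n M X"
  unfolding frob_def prS_def frob_s_def by (simp add: sum.distrib sum_lessThan_plus1)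

lemma frob_prI: "frob (n+1) (prI n M) X = frob (n+1) M (Imat n) * cnj (frob (n+1) X (Imat n))"
  unfolding prI_def frob_msc by (subst frob_cnj) simp

lemma frob_prSl: "frob (n+1) (prSl n M) X = frob_top n M X - frob (n+1) M (Imat n) * of_real (icoef n) * cnj (tr_top n X)"
proof -
  have "frob (n+1) (prSl n M) X = (\<Sum>i<n. \<Sum>j<n. (M i j - prI n M i j) * cnj (X i j))"
    unfolding frob_def prSl_def by (simp add: sum_lessThan_plus1)
  also have "\<dots> = frob_top n M X - (\<Sum>i<n. \<Sum>j<n. prI n M i j * cnj (X i j))"
    unfolding frob_top_def by (simp add: left_diff_distrib sum_subtractf)
  also have "(\<Sum>i<n. \<Sum>j<n. prI n M i j * cnj (X i j)) = frob (n+1) M (Imat n) * of_real (icoef n) * cnj (tr_top n X)"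
  proof -
    have "(\<Sum>j<n. prI n M i j * cnj (X i j)) = frob (n+1) M (Imat n) * of_real (icoef n) * cnj (X i i)" if i: "i < n" for i
    proof -
      have "(\<Sum>j<n. prI n M i j * cnj (X i j)) = (\<Sum>j<n. (if i = j then frob (n+1) M (Imat n) * of_real (icoef n) else 0) * cnj (X i j))"
        by (rule sum.cong) (auto simp: prI_def msc_def Imat_eq i)
      then show ?thesis using i by (simp add: sum_mult_delta_left)
    qed
    then have "(\<Sum>i<n. \<Sum>j<n. prI n M i j * cnj (X i j)) = (\<Sum>i<n. frob (n+1) M (Imat n) * of_real (icoef n) * cnj (X i i))"
      by (intro sum.cong) auto
    then show ?thesis unfolding tr_top_def by (simp add: sum_distrib_left)
  qed
  finally show ?thesis .
qed

lemma gxyz_eq_gcoord: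
  assumes n: "n \<ge> 1" and M: "M \<in> sl (n+1)" and X: "X \<in> sl (n+1)"
  shows "gxyz n x y z M X = gcoord n x y z M X"
proof -
  define s where "s = (of_real (icoef n) :: complex)"
  have s2: "s * s * (of_nat n + 1) = 1 / of_nat n"
    unfolding s_def by (rule icoef_sq_complex[OF n])
  have nz: "(of_nat n :: complex) \<noteq> 0" using n by simp
  have "s * (of_nat n + 1) * tr_top n M * s * cnj (tr_top n X)
      = (s * s * (of_nat n + 1)) * (tr_top n M * cnj (tr_top n X))"
    by (simp add: algebra_simps)
  then have e1: "s * (of_nat n + 1) * tr_top n M * s * cnj (tr_top n X) = tr_top n M * cnj (tr_top n X) / of_nat n"
    unfolding s2 by simp
  have "s * (of_nat n + 1) * tr_top n M * cnj (s * (of_nat n + 1) * tr_top n X)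
      = (s * s * (of_nat n + 1)) * (of_nat n + 1) * (tr_top n M * cnj (tr_top n X))"
    unfolding s_def by (simp add: algebra_simps)
  then have e2: "s * (of_nat n + 1) * tr_top n M * cnj (s * (of_nat n + 1) * tr_top n X)
      = of_real ((real n + 1) / real n) * (tr_top n M * cnj (tr_top n X))"
    unfolding s2 by (simp add: field_simps)
  have "gxyz n x y z M X = of_real (1/x) * frob (n+1) (prSl n M) X + of_real (1/y) * frob (n+1) (prI n M) X
         + of_real (1/z) * frob (n+1) (prS n M) X"
    unfolding gxyz_def sigma_def block_op_def by (simp add: frob_madd frob_msc)
  also have "\<dots> = of_real (1/x) * (frob_top n M X - tr_top n M * cnj (tr_top n X) / of_nat n)
     + of_real (1/y) * (of_real ((real n + 1) / real n) * (tr_top n M * cnj (tr_top n X))) + of_real (1/z) * frob_s n M X"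
    unfolding frob_prSl frob_prI frob_prS frob_Imat_sl[OF M] frob_Imat_sl[OF X] s_def[symmetric] e1 e2 by simp
  also have "\<dots> = gcoord n x y z M X"
    unfolding gcoord_def by (simp add: mult.commute)
  finally show ?thesis .
qed

lemma gcoord_herm: "gcoord n x y z M X = cnj (gcoord n x y z X M)"
  unfolding gcoord_def frob_top_def frob_s_def by (simp add: algebra_simps)

lemma tr_top_ms: "tr_top n (madd (msc a A) (msc b B)) = a * tr_top n A + b * tr_top n B"
  unfolding tr_top_def madd_def msc_def by (simp add: sum.distrib sum_distrib_left)
lemma frob_top_ms: "frob_top n (madd (msc a A) (msc b B)) W = a * frob_top n A W + b * frob_top n B W"
  unfolding frob_top_def madd_def msc_def by (simp add: sum.distrib sum_distrib_left algebra_simps)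
lemma frob_s_ms: "frob_s n (madd (msc a A) (msc b B)) W = a * frob_s n A W + b * frob_s n B W"
  unfolding frob_s_def madd_def msc_def by (simp add: sum.distrib sum_distrib_left algebra_simps)
lemma gcoord_ms: "gcoord n x y z (madd (msc a A) (msc b B)) W = a * gcoord n x y z A W + b * gcoord n x y z B W"
  unfolding gcoord_def tr_top_ms frob_top_ms frob_s_ms by (simp add: algebra_simps diff_divide_distrib add_divide_distrib)

lemma gxyz_hermitian:
  assumes "n \<ge> 1"
  shows "hermitian_form_on (sl (n+1)) (gxyz n x y z)"
  unfolding hermitian_form_on_def linear_on_def
proof (intro conjI ballI allI)
  fix W X Y a b assume W: "W \<in> sl (n+1)" and X: "X \<in> sl (n+1)" and Y: "Y \<in> sl (n+1)"
  then show "gxyz n x y z (madd (msc a X) (msc b Y)) W = a * gxyz n x y z X W + b * gxyz n x y z Y W"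
    using gxyz_eq_gcoord[OF assms madd_msc_in_sl[OF X Y] W] by (simp add: gxyz_eq_gcoord[OF assms] gcoord_ms)
next
  fix X W assume "X \<in> sl (n+1)" "W \<in> sl (n+1)"
  then show "gxyz n x y z W X = cnj (gxyz n x y z X W)"
    by (simp add: gxyz_eq_gcoord[OF assms]) (rule gcoord_herm)
qed

lemma frob_top_slpart:
  "frob_top n M X - tr_top n M * cnj (tr_top n X) / of_nat n =
   (\<Sum>i<n. \<Sum>j<n. slpart n M i j * cnj (slpart n X i j))"
  (is "_ = ?R")
proof (cases "n = 0")
  case True then show ?thesis unfolding frob_top_def tr_top_def by simp
next
  case False
  then have nz: "(of_nat n :: complex) \<noteq> 0" by simp
  have "?R = (\<Sum>i<n. \<Sum>j<n. M i j * cnj (X i j)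
      - (if i = j then cnj (tr_top n X) / of_nat n else 0) * M i j
      - (if i = j then tr_top n M / of_nat n else 0) * cnj (X i j)
      + (if i = j then tr_top n M * cnj (tr_top n X) / (of_nat n * of_nat n) else 0))"
    by (intro sum.cong refl) (auto simp: algebra_simps)
  also have "\<dots> = frob_top n M X - cnj (tr_top n X) / of_nat n * tr_top n M - tr_top n M / of_nat n * cnj (tr_top n X)
      + of_nat n * (tr_top n M * cnj (tr_top n X) / (of_nat n * of_nat n))"
    unfolding frob_top_def tr_top_def
    by (simp add: sum.distrib sum_subtractf sum_mult_delta_left sum_distrib_left cnj_sum del: sum_divide_distrib)
  also have "\<dots> = frob_top n M X - tr_top n M * cnj (tr_top n X) / of_nat n"
    using nz by (simp add: field_simps)
  finally show ?thesis by simp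
qed

lemma gcoord_self:
  "gcoord n x y z W W = of_real ((1/x) * (\<Sum>i<n. \<Sum>j<n. (cmod (W i j - (if i = j then tr_top n W / of_nat n else 0)))\<^sup>2)
     + ((real n + 1)/(real n * y)) * (cmod (tr_top n W))\<^sup>2
     + (1/z) * (\<Sum>i<n. (cmod (W i n))\<^sup>2 + (cmod (W n i))\<^sup>2))"
proof -
  have a: "frob_top n W W - tr_top n W * cnj (tr_top n W) / of_nat n = of_real (\<Sum>i<n. \<Sum>j<n. (cmod (W i j - (if i = j then tr_top n W / of_nat n else 0)))\<^sup>2)"
    unfolding frob_top_slpart by (simp only: of_real_sum complex_norm_square)
  have b: "frob_s n W W = of_real (\<Sum>i<n. (cmod (W i n))\<^sup>2 + (cmod (W n i))\<^sup>2)"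
    unfolding frob_s_def by (simp only: of_real_sum of_real_add complex_norm_square)
  have c: "tr_top n W * cnj (tr_top n W) = of_real ((cmod (tr_top n W))\<^sup>2)" by (simp only: complex_norm_square)
  show ?thesis unfolding gcoord_def a unfolding b c by (simp only: of_real_mult of_real_add)
qed

lemma gcoord_pos_def:
  assumes n: "n \<ge> 1" and x: "x > 0" and y: "y > 0" and z: "z > 0" and W: "W \<in> sl (n+1)"
    and G: "gcoord n x y z W W = 0"
  shows "W = mzero"
proof -
  define A1 where "A1 = (\<Sum>i<n. \<Sum>j<n. (cmod (slpart n W i j))\<^sup>2)"
  define A2 where "A2 = (\<Sum>i<n. (cmod (W i n))\<^sup>2 + (cmod (W n i))\<^sup>2)"
  define c where "c = (real n + 1) / (real n * y)"
  have "(1/x) * A1 + c * (cmod (tr_top n W))\<^sup>2 + (1/z) * A2 = 0"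
    using G unfolding gcoord_self A1_def[symmetric] A2_def[symmetric] c_def by (simp only: of_real_eq_0_iff)
  moreover have "(1/x) * A1 \<ge> 0" "c * (cmod (tr_top n W))\<^sup>2 \<ge> 0" "(1/z) * A2 \<ge> 0"
    using x y z unfolding A1_def A2_def c_def by (auto intro!: sum_nonneg divide_nonneg_pos)
  ultimately have "(1/x) * A1 = 0" "c * (cmod (tr_top n W))\<^sup>2 = 0" "(1/z) * A2 = 0"
    by linarith+
  moreover have "c > 0" using n y unfolding c_def by simp
  ultimately have A1: "A1 = 0" and A2: "A2 = 0" and tr: "tr_top n W = 0"
    using x z by simp_all
  have top: "W i j = 0" if "i < n" "j < n" for i j
  proof -
    have "\<forall>i<n. (\<Sum>j<n. (cmod (slpart n W i j))\<^sup>2) = 0"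
      using A1 unfolding A1_def by (subst (asm) sum_nonneg_eq_0_iff) (auto intro: sum_nonneg)
    then show ?thesis using that tr by (simp add: sum_nonneg_eq_0_iff)
  qed
  have rim: "W i n = 0 \<and> W n i = 0" if "i < n" for i
    using A2 that unfolding A2_def by (simp add: sum_nonneg_eq_0_iff add_nonneg_eq_0_iff)
  have "W n n = 0" using sl_last_diag[OF W] tr by simp
  then have "W i j = 0" for i j
    using top rim sl_outside[OF W, of i j] by (cases i n rule: linorder_cases; cases j n rule: linorder_cases) auto
  then show ?thesis unfolding mzero_def by blast
qed

lemma gxyz_pos_def:
  assumes "n \<ge> 1" "x > 0" "y > 0" "z > 0"
  shows "\<forall>W\<in>sl (n+1). gxyz n x y z W W = 0 \<longrightarrow> W = mzero"
  using gcoord_pos_def[OF assms] gxyz_eq_gcoord[OF assms(1)] by simp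

section \<open>The block operator\<close>

lemma prI_entries:
  assumes n: "n \<ge> 1" and X: "X \<in> sl (n+1)"
  shows "prI n X i j = (if i = j \<and> i < n then tr_top n X / of_nat n else if i = j \<and> i = n then - tr_top n X else 0)"
proof -
  define S where "S = (of_real (icoef n) :: complex)"
  have h: "S * S * (of_nat n + 1) = 1 / of_nat n" using icoef_sq_complex[OF n] unfolding S_def .
  have nz: "(of_nat n :: complex) \<noteq> 0" using n by simp
  have e: "prI n X i j = S * (of_nat n + 1) * tr_top n X * Imat n i j"
    unfolding prI_def msc_def frob_Imat_sl[OF X] S_def by simp
  have "S * (of_nat n + 1) * tr_top n X * S = (S * S * (of_nat n + 1)) * tr_top n X"
    by (simp only: ac_simps)
  then have d: "S * (of_nat n + 1) * tr_top n X * S = tr_top n X / of_nat n"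
    unfolding h by simp
  have "S * (of_nat n + 1) * tr_top n X * (- of_nat n * S) = - of_nat n * (S * (of_nat n + 1) * tr_top n X * S)"
    by (simp add: algebra_simps)
  then have "S * (of_nat n + 1) * tr_top n X * (- of_nat n * S) = - tr_top n X"
    unfolding d using nz by simp
  then show ?thesis
    using d unfolding e Imat_eq S_def[symmetric] by auto
qed

lemma sum_plus_const: "(\<Sum>i<n. f i + (c::complex)) = (\<Sum>i<n. f i) + of_nat n * c"
  by (simp add: sum.distrib)

lemma block_entries:
  assumes n: "n \<ge> 1" and X: "X \<in> sl (n+1)"
  shows "block_op n a b c X i j = (if i < n \<and> j < n then of_real a * X i j + (if i = j then of_real (b - a) * tr_top n X / of_nat n else 0)
     else if (i < n \<and> j = n) \<or> (i = n \<and> j < n) then of_real c * X i j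
     else if i = n \<and> j = n then - of_real b * tr_top n X else 0)"
  unfolding block_op_def madd_def msc_def prSl_def prS_def prI_entries[OF n X]
  by (auto simp: algebra_simps diff_divide_distrib)

lemma tr_top_block:
  assumes n: "n \<ge> 1" and X: "X \<in> sl (n+1)"
  shows "tr_top n (block_op n a b c X) = of_real b * tr_top n X"
proof -
  have nz: "(of_nat n :: complex) \<noteq> 0" using n by simp
  have "tr_top n (block_op n a b c X) = (\<Sum>i<n. of_real a * X i i + of_real (b - a) * tr_top n X / of_nat n)"
    unfolding tr_top_def block_entries[OF n X] by simp
  also have "\<dots> = of_real a * tr_top n X + of_nat n * (of_real (b - a) * tr_top n X / of_nat n)"
    unfolding sum_plus_const by (simp add: tr_top_def sum_distrib_left)
  also have "\<dots> = of_real a * tr_top n X + of_real (b - a) * tr_top n X" using nz by simp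
  also have "\<dots> = of_real b * tr_top n X" by (simp add: algebra_simps)
  finally show ?thesis .
qed

lemma block_in_sl:
  assumes n: "n \<ge> 1" and X: "X \<in> sl (n+1)"
  shows "block_op n a b c X \<in> sl (n+1)"
proof -
  have "(\<Sum>i<n+1. block_op n a b c X i i) = tr_top n (block_op n a b c X) + block_op n a b c X n n"
    unfolding sum_lessThan_plus1 tr_top_def ..
  also have "\<dots> = 0" unfolding tr_top_block[OF n X] block_entries[OF n X] by simp
  finally show ?thesis unfolding sl_def mat_space_def block_entries[OF n X] by auto
qed

lemma frob_top_block:
  assumes n: "n \<ge> 1" and X: "X \<in> sl (n+1)"
  shows "frob_top n (block_op n a b c X) W = of_real a * frob_top n X W + of_real (b - a) * tr_top n X / of_nat n * cnj (tr_top n W)"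
proof -
  have "frob_top n (block_op n a b c X) W = (\<Sum>i<n. \<Sum>j<n. of_real a * (X i j * cnj (W i j)) + (if i = j then of_real (b - a) * tr_top n X / of_nat n else 0) * cnj (W i j))"
    unfolding frob_top_def block_entries[OF n X] by (intro sum.cong refl) (auto simp: algebra_simps)
  also have "\<dots> = of_real a * frob_top n X W + of_real (b - a) * tr_top n X / of_nat n * cnj (tr_top n W)"
    unfolding frob_top_def tr_top_def by (simp add: sum.distrib sum_distrib_left sum_mult_delta_left cnj_sum del: sum_divide_distrib)
  finally show ?thesis .
qed

lemma frob_s_block:
  assumes n: "n \<ge> 1" and X: "X \<in> sl (n+1)"
  shows "frob_s n (block_op n a b c X) W = of_real c * frob_s n X W"
  unfolding frob_s_def block_entries[OF n X] by (simp add: sum_distrib_left algebra_simps)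

lemma gcoord_block:
  assumes n: "n \<ge> 1" and X: "X \<in> sl (n+1)"
  shows "gcoord n x y z (block_op n a b c X) W = of_real (a/x) * (frob_top n X W - tr_top n X * cnj (tr_top n W) / of_nat n)
     + of_real ((real n + 1) * b / (real n * y)) * (tr_top n X * cnj (tr_top n W)) + of_real (c/z) * frob_s n X W"
proof -
  have nz: "(of_nat n :: complex) \<noteq> 0" using n by simp
  have h: "of_real a * frob_top n X W + of_real (b - a) * tr_top n X / of_nat n * cnj (tr_top n W) - of_real b * tr_top n X * cnj (tr_top n W) / of_nat n
     = of_real a * (frob_top n X W - tr_top n X * cnj (tr_top n W) / of_nat n)"
    using nz by (simp add: field_simps)
  show ?thesis unfolding gcoord_def frob_top_block[OF n X] frob_s_block[OF n X] tr_top_block[OF n X] h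
    by (simp add: algebra_simps)
qed

lemma gcoord_block_herm:
  assumes n: "n \<ge> 1" and X: "X \<in> sl (n+1)" and W: "W \<in> sl (n+1)"
  shows "gcoord n x y z (block_op n a b c X) W = gcoord n x y z X (block_op n a b c W)"
  using gcoord_herm[of n x y z X "block_op n a b c W"]
  unfolding gcoord_block[OF n X] gcoord_block[OF n W] frob_top_def frob_s_def
  by (simp add: algebra_simps)

lemma block_op_linear:
  assumes n: "n \<ge> 1" and X: "X \<in> sl (n+1)" and Y: "Y \<in> sl (n+1)"
  shows "block_op n A B C (madd (msc a X) (msc b Y)) = madd (msc a (block_op n A B C X)) (msc b (block_op n A B C Y))"
proof (intro ext)
  fix i j
  show "block_op n A B C (madd (msc a X) (msc b Y)) i j = madd (msc a (block_op n A B C X)) (msc b (block_op n A B C Y)) i j"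
    unfolding block_entries[OF n madd_msc_in_sl[OF X Y]] tr_top_ms
    unfolding madd_def msc_def
    unfolding block_entries[OF n X] block_entries[OF n Y]
    by (simp add: ring_distribs mult_ac add_divide_distrib)
qed

section \<open>Elementary matrices\<close>

definition emat :: "nat \<Rightarrow> nat \<Rightarrow> cmat" where
  "emat p q = (\<lambda>i j. if i = p \<and> j = q then 1 else 0)"
definition diagm :: "(nat \<Rightarrow> complex) \<Rightarrow> cmat" where
  "diagm d = (\<lambda>i j. if i = j then d i else 0)"
definition id_top :: "nat \<Rightarrow> cmat" where
  "id_top n = diagm (\<lambda>i. if i < n then 1 else 0)"

lemma comm_msc_l: "comm N (msc a A) B = msc a (comm N A B)"
  unfolding comm_def msc_def by (simp add: sum_distrib_left algebra_simps)
lemma comm_msc_r: "comm N A (msc a B) = msc a (comm N A B)"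
  unfolding comm_def msc_def by (simp add: sum_distrib_left algebra_simps)
lemma comm_madd_l: "comm N (madd A A') B = madd (comm N A B) (comm N A' B)"
  unfolding comm_def madd_def by (simp add: sum.distrib algebra_simps)
lemma comm_madd_r: "comm N A (madd B B') = madd (comm N A B) (comm N A B')"
  unfolding comm_def madd_def by (simp add: sum.distrib algebra_simps)
lemma comm_anti: "comm N A B = msc (-1) (comm N B A)"
  unfolding comm_def msc_def by simp

lemma comm_emat_emat: "p < N \<Longrightarrow> q < N \<Longrightarrow> r < N \<Longrightarrow> s < N \<Longrightarrow>
  comm N (emat p q) (emat r s) = madd (msc (if q = r then 1 else 0) (emat p s)) (msc (- (if s = p then 1 else 0)) (emat r q))"
  unfolding comm_def emat_def madd_def msc_def
  by (intro ext) (simp add: if_distrib[of "\<lambda>u. u * _"] sum.delta cong: if_cong)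

lemma comm_diagm_emat: "r < N \<Longrightarrow> s < N \<Longrightarrow> comm N (diagm d) (emat r s) = msc (d r - d s) (emat r s)"
  unfolding comm_def emat_def diagm_def msc_def
  by (intro ext) (simp add: if_distrib[of "\<lambda>u. u * _"] if_distrib[of "\<lambda>u. _ * u"] sum.delta algebra_simps cong: if_cong)

lemma comm_emat_diagm: "r < N \<Longrightarrow> s < N \<Longrightarrow> comm N (emat r s) (diagm d) = msc (d s - d r) (emat r s)"
  unfolding comm_def emat_def diagm_def msc_def
  by (intro ext) (simp add: if_distrib[of "\<lambda>u. u * _"] if_distrib[of "\<lambda>u. _ * u"] sum.delta algebra_simps cong: if_cong)

lemma comm_diagm_diagm: "comm N (diagm d) (diagm d') = mzero"
  unfolding comm_def diagm_def mzero_def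
  by (intro ext) (simp add: if_distrib[of "\<lambda>u. u * _"] if_distrib[of "\<lambda>u. _ * u"] sum.delta algebra_simps cong: if_cong)

lemma gcoord_mzero: "gcoord n x y z mzero W = 0"
  by (simp add: gcoord_def frob_top_def frob_s_def tr_top_def mzero_def)

lemma gcoord_madd: "gcoord n x y z (madd A B) W = gcoord n x y z A W + gcoord n x y z B W"
  using gcoord_ms[of n x y z 1 A 1 B W] by (simp add: madd_def msc_def)

lemma gcoord_msc: "gcoord n x y z (msc a A) W = a * gcoord n x y z A W"
  using gcoord_ms[of n x y z a A 0 A W] by (simp add: madd_def msc_def)

lemma Imat_diagm: "Imat n = diagm (\<lambda>i. if i < n then of_real (icoef n) else if i = n then - of_nat n * of_real (icoef n) else 0)"
  unfolding diagm_def by (intro ext) (simp add: Imat_eq)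

lemma emat_mult: "emat p q i j * c = (if i = p then (if j = q then c else 0) else 0)"
  unfolding emat_def by simp

lemma sum_if_const_cond: "(\<Sum>j\<in>A. if P then f j else 0) = (if P then sum f A else (0::complex))"
  by simp

lemma frob_top_emat: "frob_top n (emat p q) W = (if p < n \<and> q < n then cnj (W p q) else 0)"
  unfolding frob_top_def emat_mult by (simp add: sum.delta sum.delta' sum_if_const_cond cong: if_cong)
lemma tr_top_emat: "tr_top n (emat p q) = (if p = q \<and> p < n then 1 else 0)"
  unfolding tr_top_def emat_def by (cases "p = q") (auto simp: sum.delta intro!: sum.neutral)
lemma frob_s_emat: "frob_s n (emat p q) W = (if p < n \<and> q = n then cnj (W p n) else if p = n \<and> q < n then cnj (W n q) else 0)"
  unfolding frob_s_def emat_mult by (auto simp: sum.distrib sum.delta sum.delta' sum_if_const_cond)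

lemma gcoord_emat: "p < n + 1 \<Longrightarrow> q < n + 1 \<Longrightarrow> gcoord n x y z (emat p q) W =
   (if p < n \<and> q < n then of_real (1/x) * (cnj (W p q) - (if p = q then cnj (tr_top n W) / of_nat n else 0))
       + (if p = q then of_real ((real n + 1)/(real n * y)) * cnj (tr_top n W) else 0)
    else if p < n \<and> q = n then of_real (1/z) * cnj (W p n)
    else if p = n \<and> q < n then of_real (1/z) * cnj (W n q) else 0)"
  unfolding gcoord_def frob_top_emat tr_top_emat frob_s_emat by auto

lemma gcoord_id_top:
  assumes n: "n \<ge> 1"
  shows "gcoord n x y z (id_top n) W = of_real ((real n + 1)/(real n * y)) * of_nat n * cnj (tr_top n W)"
proof -
  have "frob_top n (id_top n) W = cnj (tr_top n W)" unfolding frob_top_def id_top_def diagm_def tr_top_def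
    by (simp add: if_distrib[of "\<lambda>u. u * _"] sum.delta cnj_sum cong: if_cong)
  moreover have "tr_top n (id_top n) = of_nat n" unfolding tr_top_def id_top_def diagm_def by simp
  moreover have "frob_s n (id_top n) W = 0" unfolding frob_s_def id_top_def diagm_def by simp
  ultimately show ?thesis unfolding gcoord_def using n by simp
qed

section \<open>A Parseval frame\<close>

datatype frame_idx = Top nat nat | Cen | Col nat | Row nat

definition frame_idxs :: "nat \<Rightarrow> frame_idx set" where
  "frame_idxs n = (\<lambda>(p,q). Top p q) ` ({..<n}\<times>{..<n}) \<union> {Cen} \<union> Col ` {..<n} \<union> Row ` {..<n}"

lemma finite_frame_idxs: "finite (frame_idxs n)" unfolding frame_idxs_def by auto

lemma sum_frame_idxs: "(\<Sum>l\<in>frame_idxs n. F l) = (\<Sum>p<n. \<Sum>q<n. F (Top p q)) + F Cen + (\<Sum>p<n. F (Col p)) + (\<Sum>p<n. F (Row p))"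
proof -
  let ?A = "(\<lambda>(p,q). Top p q) ` ({..<n}\<times>{..<n})"
  have i1: "inj_on (\<lambda>(p,q). Top p q) ({..<n}\<times>{..<n})" by (auto simp: inj_on_def)
  have i2: "inj_on Col {..<n}" "inj_on Row {..<n}" by (auto simp: inj_on_def)
  have "(\<Sum>l\<in>frame_idxs n. F l) = sum F (?A \<union> {Cen} \<union> Col ` {..<n}) + sum F (Row ` {..<n})"
    unfolding frame_idxs_def by (rule sum.union_disjoint) auto
  also have "sum F (?A \<union> {Cen} \<union> Col ` {..<n}) = sum F (?A \<union> {Cen}) + sum F (Col ` {..<n})"
    by (rule sum.union_disjoint) auto
  also have "sum F (?A \<union> {Cen}) = sum F ?A + F Cen"
    by (subst sum.union_disjoint) auto
  also have "sum F ?A = (\<Sum>(p,q)\<in>{..<n}\<times>{..<n}. F (Top p q))"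
    by (subst sum.reindex[OF i1]) (simp add: case_prod_unfold)
  also have "\<dots> = (\<Sum>p<n. \<Sum>q<n. F (Top p q))" by (simp add: sum.cartesian_product)
  also have "sum F (Col ` {..<n}) = (\<Sum>p<n. F (Col p))" by (simp add: sum.reindex[OF i2(1)])
  also have "sum F (Row ` {..<n}) = (\<Sum>p<n. F (Row p))" by (simp add: sum.reindex[OF i2(2)])
  finally show ?thesis .
qed

text \<open>The matrices sqrt x (E_pq - delta_pq id_n / n), p, q < n, form an overcomplete Parseval
  frame of the sl_n-component for the weight 1/x; no unitary basis of sl_n has such a simple
  bracket table.\<close>

fun fvec :: "nat \<Rightarrow> real \<Rightarrow> real \<Rightarrow> real \<Rightarrow> frame_idx \<Rightarrow> cmat" where
  "fvec n x y z (Top p q) = msc (of_real (sqrt x)) (madd (emat p q) (msc (- (if p = q then 1 / of_nat n else 0)) (id_top n)))"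
| "fvec n x y z Cen = msc (of_real (sqrt y)) (Imat n)"
| "fvec n x y z (Col p) = msc (of_real (sqrt z)) (emat p n)"
| "fvec n x y z (Row p) = msc (of_real (sqrt z)) (emat n p)"

lemma Imat_split: "Imat n = madd (msc (of_real (icoef n)) (id_top n)) (msc (- of_nat n * of_real (icoef n)) (emat n n))"
  unfolding Imat_eq madd_def msc_def id_top_def diagm_def emat_def by (intro ext) auto

lemma tr_top_msc: "tr_top n (msc a A) = a * tr_top n A" unfolding tr_top_def msc_def by (simp add: sum_distrib_left)
lemma tr_top_madd: "tr_top n (madd A B) = tr_top n A + tr_top n B" unfolding tr_top_def madd_def by (simp add: sum.distrib)
lemma tr_top_id_top: "tr_top n (id_top n) = of_nat n" unfolding tr_top_def id_top_def diagm_def by simp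

lemma fvec_in_sl:
  assumes n: "n \<ge> 1" and l: "l \<in> frame_idxs n"
  shows "fvec n x y z l \<in> sl (n+1)"
proof -
  have nz: "(of_nat n :: complex) \<noteq> 0" using n by simp
  from l consider (K) p q where "l = Top p q" "p < n" "q < n" | (I) "l = Cen" | (S1) p where "l = Col p" "p < n"
    | (S2) p where "l = Row p" "p < n" unfolding frame_idxs_def by auto
  then show ?thesis
  proof cases
    case K
    have "tr_top n (fvec n x y z l) = of_real (sqrt x) * ((if p = q \<and> p < n then 1 else 0) - (if p = q then 1 / of_nat n else 0) * of_nat n)"
      unfolding K(1) by (simp add: tr_top_msc tr_top_madd tr_top_emat tr_top_id_top)
    also have "\<dots> = 0" using K(2,3) nz by auto
    finally show ?thesis unfolding sl_iff_tr_top K(1) using K(2,3)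
      by (auto simp: mat_space_def msc_def madd_def emat_def id_top_def diagm_def)
  next
    case I
    show ?thesis unfolding sl_iff_tr_top I using n
      by (auto simp: mat_space_def tr_top_def msc_def Imat_def)
  next
    case S1
    show ?thesis unfolding sl_iff_tr_top S1(1) using S1(2)
      by (auto simp: mat_space_def tr_top_def msc_def emat_def)
  next
    case S2
    show ?thesis unfolding sl_iff_tr_top S2(1) using S2(2)
      by (auto simp: mat_space_def tr_top_def msc_def emat_def)
  qed
qed

lemma gcoord_emat_last: "gcoord n x y z (emat n n) w = 0"
  by (simp add: gcoord_def frob_top_emat tr_top_emat frob_s_emat)

lemma gcoord_fvec_Top:
  assumes n: "n \<ge> 1" and p: "p < n" and q: "q < n" and x: "x > 0" and y: "y > 0"
  shows "gcoord n x y z (fvec n x y z (Top p q)) w = of_real (sqrt x / x) * cnj (slpart n w p q)"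
proof -
  have "(of_nat n :: complex) \<noteq> 0" "(of_real y :: complex) \<noteq> 0"
    using n y by simp_all
  then show ?thesis using p q
    by (simp add: gcoord_msc gcoord_madd gcoord_emat gcoord_id_top[OF n] field_simps)
qed

lemma gcoord_fvec_Cen:
  assumes n: "n \<ge> 1" and y: "y > 0"
  shows "gcoord n x y z (fvec n x y z Cen) w = of_real (sqrt y * icoef n * (real n + 1) / y) * cnj (tr_top n w)"
proof -
  have "(of_nat n :: complex) \<noteq> 0" "(of_real y :: complex) \<noteq> 0" using n y by simp_all
  then show ?thesis unfolding fvec.simps Imat_split
    by (simp add: gcoord_msc gcoord_madd gcoord_id_top[OF n] gcoord_emat_last field_simps)
qed

lemma gcoord_fvec_Col: "p < n \<Longrightarrow> gcoord n x y z (fvec n x y z (Col p)) w = of_real (sqrt z / z) * cnj (w p n)"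
  by (simp add: gcoord_msc gcoord_emat)

lemma gcoord_fvec_Row: "p < n \<Longrightarrow> gcoord n x y z (fvec n x y z (Row p)) w = of_real (sqrt z / z) * cnj (w n p)"
  by (simp add: gcoord_msc gcoord_emat)

lemma cmod_of_real_mult_cnj_sq: "(cmod (of_real r * cnj u))\<^sup>2 = r\<^sup>2 * (cmod u)\<^sup>2"
  by (simp add: norm_mult power_mult_distrib)

lemma sqrt_div_sq: "t > 0 \<Longrightarrow> (sqrt t / t)\<^sup>2 = 1 / t"
  by (simp add: power_divide power2_eq_square)

lemma gcoord_self_frame:
  assumes n: "n \<ge> 1" and x: "x > 0" and y: "y > 0" and z: "z > 0"
  shows "gcoord n x y z w w = of_real (\<Sum>l\<in>frame_idxs n. (cmod (gcoord n x y z (fvec n x y z l) w))\<^sup>2)"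
proof -
  have Cen: "(sqrt y * icoef n * (real n + 1) / y)\<^sup>2 = (real n + 1) / (real n * y)"
  proof -
    have "(sqrt y * icoef n * (real n + 1) / y)\<^sup>2 = (sqrt y)\<^sup>2 * (icoef n)\<^sup>2 * (real n + 1)\<^sup>2 / y\<^sup>2"
      by (simp add: power_mult_distrib power_divide)
    also have "\<dots> = y * (1 / (real n * (real n + 1))) * (real n + 1)\<^sup>2 / y\<^sup>2"
      using y unfolding icoef_def by simp
    also have "\<dots> = (real n + 1) / (real n * y)"
      using n y by (simp add: power2_eq_square)
    finally show ?thesis .
  qed
  have Top: "(cmod (gcoord n x y z (fvec n x y z (Top p q)) w))\<^sup>2 = (1/x) * (cmod (slpart n w p q))\<^sup>2"
    if "p < n" "q < n" for p q
    unfolding gcoord_fvec_Top[OF n that x y] cmod_of_real_mult_cnj_sq sqrt_div_sq[OF x] ..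
  have Col: "(cmod (gcoord n x y z (fvec n x y z (Col p)) w))\<^sup>2 = (1/z) * (cmod (w p n))\<^sup>2"
    and Row: "(cmod (gcoord n x y z (fvec n x y z (Row p)) w))\<^sup>2 = (1/z) * (cmod (w n p))\<^sup>2"
    if "p < n" for p
    unfolding gcoord_fvec_Col[OF that] gcoord_fvec_Row[OF that] cmod_of_real_mult_cnj_sq sqrt_div_sq[OF z] by simp_all
  have "(\<Sum>l\<in>frame_idxs n. (cmod (gcoord n x y z (fvec n x y z l) w))\<^sup>2) =
     (1/x) * (\<Sum>i<n. \<Sum>j<n. (cmod (slpart n w i j))\<^sup>2)
     + ((real n + 1)/(real n * y)) * (cmod (tr_top n w))\<^sup>2
     + (1/z) * (\<Sum>i<n. (cmod (w i n))\<^sup>2 + (cmod (w n i))\<^sup>2)"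
    unfolding sum_frame_idxs gcoord_fvec_Cen[OF n y] cmod_of_real_mult_cnj_sq Cen
    by (simp add: Top Col Row sum_distrib_left sum.distrib distrib_left del: fvec.simps)
  then show ?thesis unfolding gcoord_self by simp
qed

lemma parseval_frame_fvec:
  assumes n: "n \<ge> 1" and x: "x > 0" and y: "y > 0" and z: "z > 0"
  shows "parseval_frame (sl (n+1)) (gxyz n x y z) (fvec n x y z) (frame_idxs n)"
proof -
  have "gxyz n x y z w w = of_real (\<Sum>l\<in>frame_idxs n. (cmod (gxyz n x y z (fvec n x y z l) w))\<^sup>2)"
    if w: "w \<in> sl (n+1)" for w
  proof -
    have "(\<Sum>l\<in>frame_idxs n. (cmod (gxyz n x y z (fvec n x y z l) w))\<^sup>2)
        = (\<Sum>l\<in>frame_idxs n. (cmod (gcoord n x y z (fvec n x y z l) w))\<^sup>2)"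
      using gxyz_eq_gcoord[OF n fvec_in_sl[OF n] w] by (intro sum.cong) auto
    then show ?thesis
      using gcoord_self_frame[OF assms, of w] gxyz_eq_gcoord[OF n w w] by simp
  qed
  then show ?thesis
    unfolding parseval_frame_def using fvec_in_sl[OF n] finite_frame_idxs by blast
qed

section \<open>Brackets of frame vectors\<close>

lemma sum_norm_delta_diff2:
  fixes a b :: "nat \<Rightarrow> complex"
  assumes p: "p < n" and q: "q < n"
  shows "(\<Sum>r<n. \<Sum>s<n. ((if q = r then a s else 0) - (if s = p then b r else 0)) * cnj ((if q = r then a s else 0) - (if s = p then b r else 0)))
    = (\<Sum>s<n. a s * cnj (a s)) + (\<Sum>r<n. b r * cnj (b r)) - (a p * cnj (b q) + b q * cnj (a p))"
proof -
  have e: "\<And>r s. ((if q = r then a s else 0) - (if s = p then b r else 0)) * cnj ((if q = r then a s else 0) - (if s = p then b r else 0))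
     = (if q = r then a s * cnj (a s) else 0) + (if s = p then b r * cnj (b r) else 0)
       - (if q = r then (if s = p then a s * cnj (b r) + b r * cnj (a s) else 0) else 0)"
    by (auto simp: algebra_simps)
  show ?thesis unfolding e using p q
    by (simp add: sum.distrib sum_subtractf sum_if_const_cond sum.delta sum.delta')
qed

lemma sum_norm_delta_diff:
  fixes \<beta> :: "nat \<Rightarrow> complex"
  assumes q: "q < n"
  shows "(\<Sum>r<n. ((if q = r then \<alpha> else 0) - \<beta> r) * cnj ((if q = r then \<alpha> else 0) - \<beta> r))
    = \<alpha> * cnj \<alpha> + (\<Sum>r<n. \<beta> r * cnj (\<beta> r)) - (\<alpha> * cnj (\<beta> q) + \<beta> q * cnj \<alpha>)"
proof -
  have e: "\<And>r. ((if q = r then \<alpha> else 0) - \<beta> r) * cnj ((if q = r then \<alpha> else 0) - \<beta> r)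
     = (if q = r then \<alpha> * cnj \<alpha> - (\<alpha> * cnj (\<beta> r) + \<beta> r * cnj \<alpha>) else 0) + \<beta> r * cnj (\<beta> r)"
    by (auto simp: algebra_simps)
  show ?thesis unfolding e using q
    by (simp add: sum.distrib sum.delta sum.delta')
qed

lemma of_real_sqrt_mult_self:
  assumes "x \<ge> 0"
  shows "complex_of_real (sqrt x) * complex_of_real (sqrt x) = complex_of_real x"
proof -
  have "of_real (sqrt x) * of_real (sqrt x) = (of_real (sqrt x * sqrt x) :: complex)" by (simp only: of_real_mult)
  also have "sqrt x * sqrt x = x" using assms by simp
  finally show ?thesis .
qed

lemma norm_sqrt_mult:
  assumes x: "x \<ge> 0" and z: "z \<ge> 0"
  shows "(of_real (sqrt x) * of_real (sqrt z) * w) * cnj (of_real (sqrt x) * of_real (sqrt z) * w) = of_real x * of_real z * (w * cnj (w::complex))"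
proof -
  have "(of_real (sqrt x) * of_real (sqrt z) * w) * cnj (of_real (sqrt x) * of_real (sqrt z) * w)
      = (of_real (sqrt x) * of_real (sqrt x)) * (of_real (sqrt z) * of_real (sqrt z)) * (w * cnj w)" by (simp add: mult_ac)
  then show ?thesis unfolding of_real_sqrt_mult_self[OF x] of_real_sqrt_mult_self[OF z] .
qed

lemma sum_swap3: "(\<Sum>p\<in>A. \<Sum>r\<in>B. \<Sum>s\<in>C. f p r s) = (\<Sum>r\<in>B. \<Sum>s\<in>C. \<Sum>p\<in>A. (f p r s :: complex))"
proof -
  have "(\<Sum>p\<in>A. \<Sum>r\<in>B. \<Sum>s\<in>C. f p r s) = (\<Sum>r\<in>B. \<Sum>p\<in>A. \<Sum>s\<in>C. f p r s)" by (rule sum.swap)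
  also have "\<dots> = (\<Sum>r\<in>B. \<Sum>s\<in>C. \<Sum>p\<in>A. f p r s)" by (rule sum.cong[OF refl], rule sum.swap)
  finally show ?thesis .
qed

text \<open>A bracket of two frame vectors is a combination of elementary matrices, so its pairing
  with X is a combination of the numbers ycoord p q = g(E_pq, X).\<close>

lemmas bracket_simps = comm_msc_l comm_msc_r comm_madd_l comm_madd_r comm_emat_emat comm_diagm_emat comm_emat_diagm comm_diagm_diagm id_top_def Imat_diagm
  gcoord_madd gcoord_msc gcoord_mzero

abbreviation ycoord :: "nat \<Rightarrow> real \<Rightarrow> real \<Rightarrow> real \<Rightarrow> cmat \<Rightarrow> nat \<Rightarrow> nat \<Rightarrow> complex" where
  "ycoord n x y z X p q \<equiv> gcoord n x y z (emat p q) X"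

lemma gcoord_bracket_Top_Top:
  assumes "p < n" "q < n" "r < n" "s < n"
  shows "gcoord n x y z (comm (n+1) (fvec n x y z (Top p q)) (fvec n x y z (Top r s))) X =
    of_real (sqrt x) * of_real (sqrt x) * ((if q = r then ycoord n x y z X p s else 0) - (if s = p then ycoord n x y z X r q else 0))"
  using assms by (simp add: bracket_simps)

lemma gcoord_bracket_Top_Cen:
  assumes "p < n" "q < n"
  shows "gcoord n x y z (comm (n+1) (fvec n x y z (Top p q)) (fvec n x y z Cen)) X = 0"
  using assms by (simp add: bracket_simps)

lemma gcoord_bracket_Top_Col:
  assumes "p < n" "q < n" "r < n"
  shows "gcoord n x y z (comm (n+1) (fvec n x y z (Top p q)) (fvec n x y z (Col r))) X =
   of_real (sqrt x) * of_real (sqrt z) * ((if q = r then ycoord n x y z X p n else 0) - (if p = q then ycoord n x y z X r n / of_nat n else 0))"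
  using assms by (simp add: bracket_simps)

lemma gcoord_bracket_Top_Row:
  assumes "p < n" "q < n" "r < n"
  shows "gcoord n x y z (comm (n+1) (fvec n x y z (Top p q)) (fvec n x y z (Row r))) X =
   of_real (sqrt x) * of_real (sqrt z) * ((if p = q then ycoord n x y z X n r / of_nat n else 0) - (if r = p then ycoord n x y z X n q else 0))"
  using assms by (simp add: bracket_simps)

lemma gcoord_bracket_Cen_Cen: "gcoord n x y z (comm (n+1) (fvec n x y z Cen) (fvec n x y z Cen)) X = 0"
  by (simp add: bracket_simps)

lemma gcoord_bracket_Cen_Col:
  assumes "r < n"
  shows "gcoord n x y z (comm (n+1) (fvec n x y z Cen) (fvec n x y z (Col r))) X =
    of_real (sqrt y) * of_real (sqrt z) * (of_real (icoef n) * (of_nat n + 1)) * ycoord n x y z X r n"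
  using assms by (simp add: bracket_simps) (simp add: algebra_simps)

lemma gcoord_bracket_Cen_Row:
  assumes "r < n"
  shows "gcoord n x y z (comm (n+1) (fvec n x y z Cen) (fvec n x y z (Row r))) X =
    - of_real (sqrt y) * of_real (sqrt z) * (of_real (icoef n) * (of_nat n + 1)) * ycoord n x y z X n r"
  using assms by (simp add: bracket_simps) (simp add: algebra_simps)

lemma gcoord_bracket_Col_Col:
  assumes "p < n" "r < n"
  shows "gcoord n x y z (comm (n+1) (fvec n x y z (Col p)) (fvec n x y z (Col r))) X = 0"
  using assms by (simp add: bracket_simps)

lemma gcoord_bracket_Row_Row:
  assumes "p < n" "r < n"
  shows "gcoord n x y z (comm (n+1) (fvec n x y z (Row p)) (fvec n x y z (Row r))) X = 0"
  using assms by (simp add: bracket_simps)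

lemma gcoord_bracket_Col_Row:
  assumes "p < n" "r < n"
  shows "gcoord n x y z (comm (n+1) (fvec n x y z (Col p)) (fvec n x y z (Row r))) X =
    of_real (sqrt z) * of_real (sqrt z) * ycoord n x y z X p r"
  using assms by (simp add: bracket_simps gcoord_emat_last)

context
  fixes n :: nat and x y z :: real and X :: cmat
  assumes n: "n \<ge> 1" and x: "x > 0" and y: "y > 0" and z: "z > 0"
begin

definition ysq_top :: complex where
  "ysq_top = (\<Sum>p<n. \<Sum>s<n. ycoord n x y z X p s * cnj (ycoord n x y z X p s))"
definition ytr_top :: complex where
  "ytr_top = (\<Sum>p<n. ycoord n x y z X p p)"
definition ysq_col :: complex where
  "ysq_col = (\<Sum>r<n. ycoord n x y z X r n * cnj (ycoord n x y z X r n))"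
definition ysq_row :: complex where
  "ysq_row = (\<Sum>r<n. ycoord n x y z X n r * cnj (ycoord n x y z X n r))"

abbreviation bval :: "frame_idx \<Rightarrow> frame_idx \<Rightarrow> complex" where
  "bval k l \<equiv> gcoord n x y z (comm (n+1) (fvec n x y z k) (fvec n x y z l)) X"

lemma bracket_sum_Top_Top: "(\<Sum>p<n. \<Sum>q<n. \<Sum>r<n. \<Sum>s<n. bval (Top p q) (Top r s) * cnj (bval (Top p q) (Top r s)))
   = of_real (x * x) * (2 * of_nat n * ysq_top - 2 * (ytr_top * cnj ytr_top))"
proof -
  let ?Y = "ycoord n x y z X"
  have "(\<Sum>p<n. \<Sum>q<n. \<Sum>r<n. \<Sum>s<n. bval (Top p q) (Top r s) * cnj (bval (Top p q) (Top r s)))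
     = (\<Sum>p<n. \<Sum>q<n. of_real (x * x) * ((\<Sum>s<n. ?Y p s * cnj (?Y p s)) + (\<Sum>r<n. ?Y r q * cnj (?Y r q)) - (?Y p p * cnj (?Y q q) + ?Y q q * cnj (?Y p p))))"
  proof (intro sum.cong refl)
    fix p q assume p: "p \<in> {..<n}" and q: "q \<in> {..<n}"
    have "(\<Sum>r<n. \<Sum>s<n. bval (Top p q) (Top r s) * cnj (bval (Top p q) (Top r s)))
       = (\<Sum>r<n. \<Sum>s<n. of_real (x * x) * (((if q = r then ?Y p s else 0) - (if s = p then ?Y r q else 0)) * cnj ((if q = r then ?Y p s else 0) - (if s = p then ?Y r q else 0))))"
    proof (intro sum.cong refl)
      fix r s assume r: "r \<in> {..<n}" and s: "s \<in> {..<n}"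
      show "bval (Top p q) (Top r s) * cnj (bval (Top p q) (Top r s)) = of_real (x * x) * (((if q = r then ?Y p s else 0) - (if s = p then ?Y r q else 0)) * cnj ((if q = r then ?Y p s else 0) - (if s = p then ?Y r q else 0)))"
        unfolding gcoord_bracket_Top_Top[OF p[simplified] q[simplified] r[simplified] s[simplified]] norm_sqrt_mult[OF less_imp_le[OF x] less_imp_le[OF x]] by simp
    qed
    also have "\<dots> = of_real (x * x) * (\<Sum>r<n. \<Sum>s<n. ((if q = r then ?Y p s else 0) - (if s = p then ?Y r q else 0)) * cnj ((if q = r then ?Y p s else 0) - (if s = p then ?Y r q else 0)))"
      by (simp add: sum_distrib_left)
    also have "\<dots> = of_real (x * x) * ((\<Sum>s<n. ?Y p s * cnj (?Y p s)) + (\<Sum>r<n. ?Y r q * cnj (?Y r q)) - (?Y p p * cnj (?Y q q) + ?Y q q * cnj (?Y p p)))"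
      using sum_norm_delta_diff2[of p n q "\<lambda>s. ?Y p s" "\<lambda>r. ?Y r q"] p q by simp
    finally show "(\<Sum>r<n. \<Sum>s<n. bval (Top p q) (Top r s) * cnj (bval (Top p q) (Top r s))) = \<dots>" .
  qed
  also have "\<dots> = of_real (x * x) * ((\<Sum>p<n. \<Sum>q<n. (\<Sum>s<n. ?Y p s * cnj (?Y p s))) + (\<Sum>p<n. \<Sum>q<n. (\<Sum>r<n. ?Y r q * cnj (?Y r q)))
      - ((\<Sum>p<n. \<Sum>q<n. ?Y p p * cnj (?Y q q)) + (\<Sum>p<n. \<Sum>q<n. ?Y q q * cnj (?Y p p))))"
    by (simp only: sum_distrib_left[symmetric] sum.distrib sum_subtractf)
  also have "(\<Sum>p<n. \<Sum>q<n. (\<Sum>s<n. ?Y p s * cnj (?Y p s))) = of_nat n * ysq_top"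
    unfolding ysq_top_def by (simp add: sum_distrib_left)
  also have "(\<Sum>p<n. \<Sum>q<n. (\<Sum>r<n. ?Y r q * cnj (?Y r q))) = of_nat n * ysq_top"
    unfolding ysq_top_def by (simp add: sum_distrib_left sum.swap[of "\<lambda>r q. ?Y r q * cnj (?Y r q)"])
  also have "(\<Sum>p<n. \<Sum>q<n. ?Y p p * cnj (?Y q q)) = ytr_top * cnj ytr_top"
    unfolding ytr_top_def cnj_sum sum_product ..
  also have "(\<Sum>p<n. \<Sum>q<n. ?Y q q * cnj (?Y p p)) = ytr_top * cnj ytr_top"
    unfolding ytr_top_def cnj_sum sum_product by (rule sum.swap)
  finally show ?thesis by (simp add: algebra_simps)
qed

lemma bracket_sum_Top_Col: "(\<Sum>p<n. \<Sum>q<n. \<Sum>r<n. bval (Top p q) (Col r) * cnj (bval (Top p q) (Col r)))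
   = of_real (x * z) * ((of_nat n - 1 / of_nat n) * ysq_col)"
proof -
  let ?Y = "ycoord n x y z X"
  have nz: "(of_nat n :: complex) \<noteq> 0" using n by simp
  have "(\<Sum>p<n. \<Sum>q<n. \<Sum>r<n. bval (Top p q) (Col r) * cnj (bval (Top p q) (Col r)))
     = (\<Sum>p<n. \<Sum>q<n. of_real (x * z) * (?Y p n * cnj (?Y p n) + (if p = q then ysq_col / (of_nat n * of_nat n) - 2 * (?Y p n * cnj (?Y p n)) / of_nat n else 0)))"
  proof (intro sum.cong refl)
    fix p q assume p: "p \<in> {..<n}" and q: "q \<in> {..<n}"
    let ?\<beta> = "\<lambda>r. if p = q then ?Y r n / of_nat n else 0"
    have "(\<Sum>r<n. bval (Top p q) (Col r) * cnj (bval (Top p q) (Col r)))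
       = (\<Sum>r<n. of_real (x * z) * (((if q = r then ?Y p n else 0) - ?\<beta> r) * cnj ((if q = r then ?Y p n else 0) - ?\<beta> r)))"
    proof (intro sum.cong refl)
      fix r assume r: "r \<in> {..<n}"
      show "bval (Top p q) (Col r) * cnj (bval (Top p q) (Col r)) = of_real (x * z) * (((if q = r then ?Y p n else 0) - ?\<beta> r) * cnj ((if q = r then ?Y p n else 0) - ?\<beta> r))"
        unfolding gcoord_bracket_Top_Col[OF p[simplified] q[simplified] r[simplified]] norm_sqrt_mult[OF less_imp_le[OF x] less_imp_le[OF z]] by simp
    qed
    also have "\<dots> = of_real (x * z) * (\<Sum>r<n. ((if q = r then ?Y p n else 0) - ?\<beta> r) * cnj ((if q = r then ?Y p n else 0) - ?\<beta> r))"
      by (simp add: sum_distrib_left)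
    also have "\<dots> = of_real (x * z) * (?Y p n * cnj (?Y p n) + (\<Sum>r<n. ?\<beta> r * cnj (?\<beta> r)) - (?Y p n * cnj (?\<beta> q) + ?\<beta> q * cnj (?Y p n)))"
      using sum_norm_delta_diff[of q n "?Y p n" ?\<beta>] q by simp
    also have "\<dots> = of_real (x * z) * (?Y p n * cnj (?Y p n) + (if p = q then ysq_col / (of_nat n * of_nat n) - 2 * (?Y p n * cnj (?Y p n)) / of_nat n else 0))"
      unfolding ysq_col_def by (cases "p = q") (simp_all add: sum_divide_distrib[symmetric] algebra_simps)
    finally show "(\<Sum>r<n. bval (Top p q) (Col r) * cnj (bval (Top p q) (Col r))) = \<dots>" .
  qed
  also have "\<dots> = of_real (x * z) * (of_nat n * ysq_col + (of_nat n * (ysq_col / (of_nat n * of_nat n)) - 2 * ysq_col / of_nat n))"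
    unfolding ysq_col_def
    by (simp add: sum_distrib_left[symmetric] sum.distrib sum.delta sum.delta' sum_subtractf sum_divide_distrib[symmetric])
  also have "\<dots> = of_real (x * z) * ((of_nat n - 1 / of_nat n) * ysq_col)"
    using nz by (simp add: field_simps)
  finally show ?thesis .
qed

lemma bracket_sum_Top_Row: "(\<Sum>p<n. \<Sum>q<n. \<Sum>r<n. bval (Top p q) (Row r) * cnj (bval (Top p q) (Row r)))
   = of_real (x * z) * ((of_nat n - 1 / of_nat n) * ysq_row)"
proof -
  let ?Y = "ycoord n x y z X"
  have nz: "(of_nat n :: complex) \<noteq> 0" using n by simp
  have "(\<Sum>p<n. \<Sum>q<n. \<Sum>r<n. bval (Top p q) (Row r) * cnj (bval (Top p q) (Row r)))
     = (\<Sum>p<n. \<Sum>q<n. of_real (x * z) * (?Y n q * cnj (?Y n q) + (if p = q then ysq_row / (of_nat n * of_nat n) - 2 * (?Y n q * cnj (?Y n q)) / of_nat n else 0)))"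
  proof (intro sum.cong refl)
    fix p q assume p: "p \<in> {..<n}" and q: "q \<in> {..<n}"
    let ?\<beta> = "\<lambda>r. if p = q then ?Y n r / of_nat n else 0"
    have "(\<Sum>r<n. bval (Top p q) (Row r) * cnj (bval (Top p q) (Row r)))
       = (\<Sum>r<n. of_real (x * z) * (((if p = r then ?Y n q else 0) - ?\<beta> r) * cnj ((if p = r then ?Y n q else 0) - ?\<beta> r)))"
    proof (intro sum.cong refl)
      fix r assume r: "r \<in> {..<n}"
      have m: "((if p = q then ?Y n r / of_nat n else 0) - (if r = p then ?Y n q else 0)) * cnj ((if p = q then ?Y n r / of_nat n else 0) - (if r = p then ?Y n q else 0))
        = ((if p = r then ?Y n q else 0) - ?\<beta> r) * cnj ((if p = r then ?Y n q else 0) - ?\<beta> r)"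
        by (auto simp: algebra_simps)
      show "bval (Top p q) (Row r) * cnj (bval (Top p q) (Row r)) = of_real (x * z) * (((if p = r then ?Y n q else 0) - ?\<beta> r) * cnj ((if p = r then ?Y n q else 0) - ?\<beta> r))"
        unfolding gcoord_bracket_Top_Row[OF p[simplified] q[simplified] r[simplified]] norm_sqrt_mult[OF less_imp_le[OF x] less_imp_le[OF z]] m by simp
    qed
    also have "\<dots> = of_real (x * z) * (\<Sum>r<n. ((if p = r then ?Y n q else 0) - ?\<beta> r) * cnj ((if p = r then ?Y n q else 0) - ?\<beta> r))"
      by (simp add: sum_distrib_left)
    also have "\<dots> = of_real (x * z) * (?Y n q * cnj (?Y n q) + (\<Sum>r<n. ?\<beta> r * cnj (?\<beta> r)) - (?Y n q * cnj (?\<beta> p) + ?\<beta> p * cnj (?Y n q)))"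
      using sum_norm_delta_diff[of p n "?Y n q" ?\<beta>] p by simp
    also have "\<dots> = of_real (x * z) * (?Y n q * cnj (?Y n q) + (if p = q then ysq_row / (of_nat n * of_nat n) - 2 * (?Y n q * cnj (?Y n q)) / of_nat n else 0))"
      unfolding ysq_row_def by (cases "p = q") (simp_all add: sum_divide_distrib[symmetric] algebra_simps)
    finally show "(\<Sum>r<n. bval (Top p q) (Row r) * cnj (bval (Top p q) (Row r))) = \<dots>" .
  qed
  also have "\<dots> = of_real (x * z) * (of_nat n * ysq_row + (of_nat n * (ysq_row / (of_nat n * of_nat n)) - 2 * ysq_row / of_nat n))"
    unfolding ysq_row_def
    by (simp add: sum_distrib_left[symmetric] sum.distrib sum.delta sum.delta' sum_subtractf sum_divide_distrib[symmetric])
  also have "\<dots> = of_real (x * z) * ((of_nat n - 1 / of_nat n) * ysq_row)"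
    using nz by (simp add: field_simps)
  finally show ?thesis .
qed

lemma icoef_factor_norm: "(of_real (icoef n) * (of_nat n + 1)) * cnj (of_real (icoef n) * (of_nat n + 1)) = ((of_nat n + 1) / of_nat n :: complex)"
proof -
  have "(of_real (icoef n) * (of_nat n + 1)) * cnj (of_real (icoef n) * (of_nat n + 1)) = (of_real (icoef n) * of_real (icoef n) * (of_nat n + 1)) * (of_nat n + 1 :: complex)"
    by (simp add: algebra_simps)
  also have "\<dots> = (of_nat n + 1) / of_nat n" unfolding icoef_sq_complex[OF n] by simp
  finally show ?thesis .
qed

lemma bracket_sum_Cen_Col: "(\<Sum>r<n. bval Cen (Col r) * cnj (bval Cen (Col r))) = of_real (y * z) * ((of_nat n + 1) / of_nat n * ysq_col)"
proof -
  let ?Y = "ycoord n x y z X"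
  have "(\<Sum>r<n. bval Cen (Col r) * cnj (bval Cen (Col r))) = (\<Sum>r<n. of_real y * of_real z * ((of_nat n + 1) / of_nat n) * (?Y r n * cnj (?Y r n)))"
  proof (intro sum.cong refl)
    fix r assume r: "r \<in> {..<n}"
    have "bval Cen (Col r) * cnj (bval Cen (Col r)) = of_real y * of_real z * ((of_real (icoef n) * (of_nat n + 1)) * cnj (of_real (icoef n) * (of_nat n + 1))) * (?Y r n * cnj (?Y r n))"
      unfolding gcoord_bracket_Cen_Col[OF r[simplified]] using norm_sqrt_mult[OF less_imp_le[OF y] less_imp_le[OF z], of "of_real (icoef n) * (of_nat n + 1) * ?Y r n"]
      by (simp add: algebra_simps)
    then show "bval Cen (Col r) * cnj (bval Cen (Col r)) = of_real y * of_real z * ((of_nat n + 1) / of_nat n) * (?Y r n * cnj (?Y r n))"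
      unfolding icoef_factor_norm .
  qed
  then show ?thesis unfolding ysq_col_def by (simp add: sum_distrib_left mult_ac)
qed

lemma bracket_sum_Cen_Row: "(\<Sum>r<n. bval Cen (Row r) * cnj (bval Cen (Row r))) = of_real (y * z) * ((of_nat n + 1) / of_nat n * ysq_row)"
proof -
  let ?Y = "ycoord n x y z X"
  have "(\<Sum>r<n. bval Cen (Row r) * cnj (bval Cen (Row r))) = (\<Sum>r<n. of_real y * of_real z * ((of_nat n + 1) / of_nat n) * (?Y n r * cnj (?Y n r)))"
  proof (intro sum.cong refl)
    fix r assume r: "r \<in> {..<n}"
    have "bval Cen (Row r) * cnj (bval Cen (Row r)) = of_real y * of_real z * ((of_real (icoef n) * (of_nat n + 1)) * cnj (of_real (icoef n) * (of_nat n + 1))) * (?Y n r * cnj (?Y n r))"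
      unfolding gcoord_bracket_Cen_Row[OF r[simplified]] using norm_sqrt_mult[OF less_imp_le[OF y] less_imp_le[OF z], of "of_real (icoef n) * (of_nat n + 1) * ?Y n r"]
      by (simp add: algebra_simps)
    then show "bval Cen (Row r) * cnj (bval Cen (Row r)) = of_real y * of_real z * ((of_nat n + 1) / of_nat n) * (?Y n r * cnj (?Y n r))"
      unfolding icoef_factor_norm .
  qed
  then show ?thesis unfolding ysq_row_def by (simp add: sum_distrib_left mult_ac)
qed

lemma bracket_sum_Col_Row: "(\<Sum>p<n. \<Sum>r<n. bval (Col p) (Row r) * cnj (bval (Col p) (Row r))) = of_real (z * z) * ysq_top"
proof -
  let ?Y = "ycoord n x y z X"
  have "(\<Sum>p<n. \<Sum>r<n. bval (Col p) (Row r) * cnj (bval (Col p) (Row r))) = (\<Sum>p<n. \<Sum>r<n. of_real (z * z) * (?Y p r * cnj (?Y p r)))"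
  proof (intro sum.cong refl)
    fix p r assume p: "p \<in> {..<n}" and r: "r \<in> {..<n}"
    show "bval (Col p) (Row r) * cnj (bval (Col p) (Row r)) = of_real (z * z) * (?Y p r * cnj (?Y p r))"
      unfolding gcoord_bracket_Col_Row[OF p[simplified] r[simplified]] norm_sqrt_mult[OF less_imp_le[OF z] less_imp_le[OF z]] by simp
  qed
  then show ?thesis unfolding ysq_top_def by (simp add: sum_distrib_left)
qed

lemma bval_anti: "bval k l = - bval l k"
  by (subst comm_anti) (simp add: gcoord_msc)

lemma bval_norm_sym: "bval k l * cnj (bval k l) = bval l k * cnj (bval l k)"
  unfolding bval_anti[of k l] by simp

lemma bracket_sum_frame: "(\<Sum>k\<in>frame_idxs n. \<Sum>l\<in>frame_idxs n. bval k l * cnj (bval k l)) =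
   of_real (x * x) * (2 * of_nat n * ysq_top - 2 * (ytr_top * cnj ytr_top))
   + 2 * (of_real (x * z) * ((of_nat n - 1 / of_nat n) * ysq_col)) + 2 * (of_real (x * z) * ((of_nat n - 1 / of_nat n) * ysq_row))
   + 2 * (of_real (y * z) * ((of_nat n + 1) / of_nat n * ysq_col)) + 2 * (of_real (y * z) * ((of_nat n + 1) / of_nat n * ysq_row))
   + 2 * (of_real (z * z) * ysq_top)"
proof -
  let ?N = "\<lambda>k l. bval k l * cnj (bval k l)"
  have Top_Cen: "(\<Sum>p<n. \<Sum>q<n. ?N (Top p q) Cen) = 0" by (simp add: gcoord_bracket_Top_Cen[unfolded Suc_eq_plus1[symmetric]] del: fvec.simps)
  have Cen_Top: "(\<Sum>p<n. \<Sum>q<n. ?N Cen (Top p q)) = 0" by (subst bval_norm_sym) (simp add: gcoord_bracket_Top_Cen[unfolded Suc_eq_plus1[symmetric]] del: fvec.simps)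
  have Cen_Cen: "?N Cen Cen = 0" by (simp add: gcoord_bracket_Cen_Cen[unfolded Suc_eq_plus1[symmetric]] del: fvec.simps)
  have Col_Top: "(\<Sum>p<n. \<Sum>r<n. \<Sum>s<n. ?N (Col p) (Top r s)) = (\<Sum>r<n. \<Sum>s<n. \<Sum>p<n. ?N (Top r s) (Col p))"
    by (subst bval_norm_sym) (rule sum_swap3)
  have Col_Cen: "(\<Sum>p<n. ?N (Col p) Cen) = (\<Sum>p<n. ?N Cen (Col p))" by (subst bval_norm_sym) (rule refl)
  have Col_Col: "(\<Sum>p<n. \<Sum>r<n. ?N (Col p) (Col r)) = 0" by (simp add: gcoord_bracket_Col_Col[unfolded Suc_eq_plus1[symmetric]] del: fvec.simps)
  have Row_Top: "(\<Sum>p<n. \<Sum>r<n. \<Sum>s<n. ?N (Row p) (Top r s)) = (\<Sum>r<n. \<Sum>s<n. \<Sum>p<n. ?N (Top r s) (Row p))"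
    by (subst bval_norm_sym) (rule sum_swap3)
  have Row_Cen: "(\<Sum>p<n. ?N (Row p) Cen) = (\<Sum>p<n. ?N Cen (Row p))" by (subst bval_norm_sym) (rule refl)
  have Row_Col: "(\<Sum>p<n. \<Sum>r<n. ?N (Row p) (Col r)) = (\<Sum>p<n. \<Sum>r<n. ?N (Col p) (Row r))"
    by (subst bval_norm_sym) (rule sum.swap)
  have Row_Row: "(\<Sum>p<n. \<Sum>r<n. ?N (Row p) (Row r)) = 0" by (simp add: gcoord_bracket_Row_Row[unfolded Suc_eq_plus1[symmetric]] del: fvec.simps)
  have "(\<Sum>k\<in>frame_idxs n. \<Sum>l\<in>frame_idxs n. ?N k l) =
     (\<Sum>p<n. \<Sum>q<n. \<Sum>r<n. \<Sum>s<n. ?N (Top p q) (Top r s)) + (\<Sum>p<n. \<Sum>q<n. ?N (Top p q) Cen)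
       + (\<Sum>p<n. \<Sum>q<n. \<Sum>r<n. ?N (Top p q) (Col r)) + (\<Sum>p<n. \<Sum>q<n. \<Sum>r<n. ?N (Top p q) (Row r))
     + ((\<Sum>p<n. \<Sum>q<n. ?N Cen (Top p q)) + ?N Cen Cen + (\<Sum>r<n. ?N Cen (Col r)) + (\<Sum>r<n. ?N Cen (Row r)))
     + ((\<Sum>p<n. \<Sum>r<n. \<Sum>s<n. ?N (Col p) (Top r s)) + (\<Sum>p<n. ?N (Col p) Cen) + (\<Sum>p<n. \<Sum>r<n. ?N (Col p) (Col r)) + (\<Sum>p<n. \<Sum>r<n. ?N (Col p) (Row r)))
     + ((\<Sum>p<n. \<Sum>r<n. \<Sum>s<n. ?N (Row p) (Top r s)) + (\<Sum>p<n. ?N (Row p) Cen) + (\<Sum>p<n. \<Sum>r<n. ?N (Row p) (Col r)) + (\<Sum>p<n. \<Sum>r<n. ?N (Row p) (Row r)))"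
    unfolding sum_frame_idxs by (simp only: sum.distrib)
  also have "\<dots> = of_real (x * x) * (2 * of_nat n * ysq_top - 2 * (ytr_top * cnj ytr_top))
   + 2 * (of_real (x * z) * ((of_nat n - 1 / of_nat n) * ysq_col)) + 2 * (of_real (x * z) * ((of_nat n - 1 / of_nat n) * ysq_row))
   + 2 * (of_real (y * z) * ((of_nat n + 1) / of_nat n * ysq_col)) + 2 * (of_real (y * z) * ((of_nat n + 1) / of_nat n * ysq_row))
   + 2 * (of_real (z * z) * ysq_top)"
    unfolding Top_Cen Cen_Top Cen_Cen Col_Top Col_Cen Col_Col Row_Top Row_Cen Row_Col Row_Row bracket_sum_Top_Top bracket_sum_Top_Col bracket_sum_Top_Row bracket_sum_Cen_Col bracket_sum_Cen_Row bracket_sum_Col_Row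
    by (simp add: algebra_simps)
  finally show ?thesis .
qed

lemma ycoord_top:
  assumes p: "p < n" and s: "s < n"
  shows "ycoord n x y z X p s = of_real (1/x) * (cnj (X p s) - (if p = s then cnj (tr_top n X) / of_nat n else 0))
     + (if p = s then of_real ((real n + 1)/(real n * y)) * cnj (tr_top n X) else 0)"
  using p s by (simp add: gcoord_emat)

lemma ytr_top_eq: "ytr_top = of_nat n * (of_real ((real n + 1)/(real n * y)) * cnj (tr_top n X))"
proof -
  have nz: "(of_nat n :: complex) \<noteq> 0" using n by simp
  have "ytr_top = (\<Sum>p<n. of_real (1/x) * (cnj (X p p) - cnj (tr_top n X) / of_nat n) + of_real ((real n + 1)/(real n * y)) * cnj (tr_top n X))"
    unfolding ytr_top_def by (intro sum.cong refl) (simp add: ycoord_top)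
  also have "\<dots> = of_real (1/x) * (cnj (tr_top n X) - of_nat n * (cnj (tr_top n X) / of_nat n)) + of_nat n * (of_real ((real n + 1)/(real n * y)) * cnj (tr_top n X))"
  proof -
    have "(\<Sum>p<n. of_real (1/x) * (cnj (X p p) - cnj (tr_top n X) / of_nat n)) = of_real (1/x) * (\<Sum>p<n. (cnj (X p p) - cnj (tr_top n X) / of_nat n))"
      by (simp only: sum_distrib_left)
    also have "(\<Sum>p<n. (cnj (X p p) - cnj (tr_top n X) / of_nat n)) = cnj (tr_top n X) - of_nat n * (cnj (tr_top n X) / of_nat n)"
      unfolding sum_subtractf by (simp add: tr_top_def cnj_sum)
    finally show ?thesis by (simp only: sum.distrib) simp
  qed
  also have "\<dots> = of_nat n * (of_real ((real n + 1)/(real n * y)) * cnj (tr_top n X))" using nz by simp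
  finally show ?thesis .
qed

definition sq_sltop :: complex where
  "sq_sltop = (\<Sum>p<n. \<Sum>s<n. slpart n X p s * cnj (slpart n X p s))"

lemma ysq_top_eq: "ysq_top = of_real (1/(x*x)) * sq_sltop + of_nat n * (of_real ((real n + 1)/(real n * y)) * cnj (tr_top n X)) * cnj (of_real ((real n + 1)/(real n * y)) * cnj (tr_top n X))"
proof -
  define \<kappa> where "\<kappa> = of_real ((real n + 1)/(real n * y)) * cnj (tr_top n X)"
  define u where "u = (\<lambda>p s. cnj (X p s) - (if p = s then cnj (tr_top n X) / of_nat n else 0))"
  have nz: "(of_nat n :: complex) \<noteq> 0" using n by simp
  have us: "(\<Sum>p<n. u p p) = 0"
  proof -
    have "(\<Sum>p<n. u p p) = cnj (tr_top n X) - of_nat n * (cnj (tr_top n X) / of_nat n)"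
      unfolding u_def sum_subtractf by (simp add: tr_top_def cnj_sum)
    then show ?thesis using nz by simp
  qed
  have Yu: "ycoord n x y z X p s = of_real (1/x) * u p s + (if p = s then \<kappa> else 0)" if "p < n" "s < n" for p s
    using that unfolding ycoord_top[OF that] u_def \<kappa>_def by simp
  have "ysq_top = (\<Sum>p<n. \<Sum>s<n. of_real (1/(x*x)) * (u p s * cnj (u p s)) + (if p = s then of_real (1/x) * (u p p * cnj \<kappa> + \<kappa> * cnj (u p p)) + \<kappa> * cnj \<kappa> else 0))"
    unfolding ysq_top_def
  proof (intro sum.cong refl)
    fix p s assume p: "p \<in> {..<n}" and s: "s \<in> {..<n}"
    show "ycoord n x y z X p s * cnj (ycoord n x y z X p s) = of_real (1/(x*x)) * (u p s * cnj (u p s)) + (if p = s then of_real (1/x) * (u p p * cnj \<kappa> + \<kappa> * cnj (u p p)) + \<kappa> * cnj \<kappa> else 0)"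
      unfolding Yu[OF p[simplified] s[simplified]]
      by (cases "p = s") (simp_all add: algebra_simps)
  qed
  also have "\<dots> = of_real (1/(x*x)) * (\<Sum>p<n. \<Sum>s<n. u p s * cnj (u p s)) + (of_real (1/x) * ((\<Sum>p<n. u p p) * cnj \<kappa> + \<kappa> * cnj (\<Sum>p<n. u p p)) + of_nat n * (\<kappa> * cnj \<kappa>))"
    by (simp add: sum.distrib sum_distrib_left sum_distrib_right cnj_sum sum.delta algebra_simps)
  also have "(\<Sum>p<n. \<Sum>s<n. u p s * cnj (u p s)) = sq_sltop"
    unfolding sq_sltop_def u_def by (intro sum.cong refl) (simp add: mult.commute)
  finally show ?thesis unfolding us \<kappa>_def by simp
qed

lemma ysq_col_eq: "ysq_col = of_real (1/(z*z)) * (\<Sum>r<n. X r n * cnj (X r n))"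
  unfolding ysq_col_def by (simp add: gcoord_emat sum_distrib_left algebra_simps)

lemma ysq_row_eq: "ysq_row = of_real (1/(z*z)) * (\<Sum>r<n. X n r * cnj (X n r))"
  unfolding ysq_row_def by (simp add: gcoord_emat sum_distrib_left algebra_simps)

lemma bracket_sum_frame_block:
  assumes X: "X \<in> sl (n+1)"
  shows "(\<Sum>k\<in>frame_idxs n. \<Sum>l\<in>frame_idxs n. bval k l * cnj (bval k l)) =
    2 * gcoord n x y z (block_op n (real n * x + z\<^sup>2 / x) ((real n + 1) * z\<^sup>2 / y)
               ((real n + 1) / real n * ((real n - 1) * x + y)) X) X"
proof -
  define T where "T = tr_top n X"
  define V1 where "V1 = (\<Sum>r<n. X r n * cnj (X r n))"
  define V2 where "V2 = (\<Sum>r<n. X n r * cnj (X n r))"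
  have rim: "frob_s n X X = V1 + V2" unfolding frob_s_def V1_def V2_def by (simp add: sum.distrib)
  have top: "frob_top n X X - tr_top n X * cnj (tr_top n X) / of_nat n = sq_sltop" unfolding frob_top_slpart sq_sltop_def ..
  have nz: "(of_nat n :: complex) \<noteq> 0" using n by simp
  have xz: "(of_real x :: complex) \<noteq> 0" "(of_real y :: complex) \<noteq> 0" "(of_real z :: complex) \<noteq> 0" using x y z by auto
  have cnj_coef: "cnj (of_real ((real n + 1)/(real n * y)) * cnj T) = of_real ((real n + 1)/(real n * y)) * T" by simp
  show ?thesis
    unfolding bracket_sum_frame ysq_top_eq ytr_top_eq ysq_col_eq ysq_row_eq gcoord_block[OF n X] rim top
    unfolding T_def[symmetric] V1_def[symmetric] V2_def[symmetric] cnj_coef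
    using nz xz by (simp add: field_simps power2_eq_square)
qed

end

section \<open>A unitary basis\<close>

text \<open>The rows helmert 1, ..., helmert n of the Helmert matrix are an orthonormal basis of the
  trace-free real diagonal (n+1) x (n+1) matrices. For k < n they lie in sl_n, and helmert n is
  the diagonal of Imat n, so the basis is also orthogonal for gxyz.\<close>

definition helmert :: "nat \<Rightarrow> nat \<Rightarrow> real" where
  "helmert k i = (if i < k then 1 / sqrt (real k * (real k + 1))
     else if i = k then - real k / sqrt (real k * (real k + 1)) else 0)"

lemma helmert_zero: "k < i \<Longrightarrow> helmert k i = 0"
  unfolding helmert_def by simp

lemma sum_helmert_mult:
  assumes "k < M"
  shows "(\<Sum>i<M. helmert k i * f i) = ((\<Sum>i<k. f i) - real k * f k) / sqrt (real k * (real k + 1))"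
proof -
  have "(\<Sum>i<M. helmert k i * f i) = (\<Sum>i<Suc k. helmert k i * f i)"
    using assms by (intro sum.mono_neutral_right) (auto simp: helmert_zero)
  also have "\<dots> = (\<Sum>i<k. f i / sqrt (real k * (real k + 1))) - real k * f k / sqrt (real k * (real k + 1))"
    by (simp add: helmert_def)
  finally show ?thesis by (simp add: sum_divide_distrib[symmetric] diff_divide_distrib)
qed

lemma sum_helmert: "k < M \<Longrightarrow> (\<Sum>i<M. helmert k i) = 0"
  using sum_helmert_mult[of k M "\<lambda>_. 1"] by simp

lemma sum_helmert_mult_less:
  assumes "k < l" "l < M"
  shows "(\<Sum>i<M. helmert k i * helmert l i) = 0"
proof -
  have "(\<Sum>i<k. helmert l i) = real k * helmert l k"
    using assms(1) by (simp add: helmert_def)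
  then show ?thesis using sum_helmert_mult[of k M "helmert l"] assms by simp
qed

lemma sum_helmert_sq:
  assumes "1 \<le> k" "k < M"
  shows "(\<Sum>i<M. helmert k i * helmert k i) = 1"
proof -
  define c where "c = sqrt (real k * (real k + 1))"
  have c: "c * c = real k * (real k + 1)" "c > 0" using assms(1) unfolding c_def by auto
  have "(\<Sum>i<k. helmert k i) = real k / c" and "helmert k k = - real k / c"
    unfolding helmert_def c_def by simp_all
  moreover have "(\<Sum>i<M. helmert k i * helmert k i) = ((\<Sum>i<k. helmert k i) - real k * helmert k k) / c"
    unfolding c_def by (rule sum_helmert_mult[OF assms(2)])
  ultimately have "(\<Sum>i<M. helmert k i * helmert k i) = (real k / c + real k * (real k / c)) / c"
    by simp
  also have "\<dots> = (real k * (real k + 1)) / (c * c)"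
    by (simp add: add_divide_distrib[symmetric] divide_divide_eq_left algebra_simps)
  also have "\<dots> = 1" unfolding c(1)[symmetric] using c(2) by simp
  finally show ?thesis .
qed

lemma sum_helmert_helmert:
  assumes "1 \<le> k" "k < M" "l < M"
  shows "(\<Sum>i<M. helmert k i * helmert l i) = (if k = l then 1 else 0)"
  using assms sum_helmert_sq sum_helmert_mult_less[of k l M] sum_helmert_mult_less[of l k M]
  by (cases k l rule: linorder_cases) (simp_all add: mult.commute)

lemma helmert_complete:
  "i \<le> n \<Longrightarrow> a \<le> n \<Longrightarrow>
    (\<Sum>k<n. helmert (k+1) i * helmert (k+1) a) = (if i = a then 1 else 0) - 1 / (real n + 1)"
proof (induction n arbitrary: i a)
  case (Suc n)
  define c where "c = (real n + 1) * (real n + 2)"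
  have c: "c > 0" unfolding c_def by simp
  have "helmert (n+1) j = (if j = n+1 then - (real n + 1) else 1) / sqrt c" if "j \<le> n+1" for j
    using that unfolding helmert_def c_def by (simp add: algebra_simps)
  moreover have "sqrt c * sqrt c = c" using c by simp
  ultimately have last: "helmert (n+1) i * helmert (n+1) a
      = (if i = n+1 then - (real n + 1) else 1) * (if a = n+1 then - (real n + 1) else 1) / c"
    using Suc.prems by (simp add: field_simps)
  have "(\<Sum>k<Suc n. helmert (k+1) i * helmert (k+1) a)
      = (\<Sum>k<n. helmert (k+1) i * helmert (k+1) a) + helmert (n+1) i * helmert (n+1) a"
    by simp
  also have "\<dots> = (if i = a then 1 else 0) - 1 / (real (Suc n) + 1)"
  proof (cases "i \<le> n \<and> a \<le> n")
    case True
    then have "(\<Sum>k<n. helmert (k+1) i * helmert (k+1) a) = (if i = a then 1 else 0) - 1 / (real n + 1)"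
      using Suc.IH by simp
    moreover have "1 / (real n + 1) - 1 / c = 1 / (real n + 2)"
      unfolding c_def by (simp add: field_simps add_nonneg_eq_0_iff)
    ultimately show ?thesis using True unfolding last by (simp add: algebra_simps)
  next
    case False
    then have "(\<Sum>k<n. helmert (k+1) i * helmert (k+1) a) = 0"
      using Suc.prems by (intro sum.neutral) (auto simp: helmert_zero)
    moreover have "(real n + 1) * (real n + 1) / c = 1 - 1 / (real n + 2)"
      and "- (real n + 1) / c = - 1 / (real n + 2)"
      unfolding c_def by (simp_all add: field_simps add_nonneg_eq_0_iff)
    ultimately show ?thesis using False Suc.prems unfolding last by (auto simp: algebra_simps)
  qed
  finally show ?case .
qed simp

lemma helmert_expansion:
  fixes v :: "nat \<Rightarrow> complex"
  assumes s: "(\<Sum>i<n+1. v i) = 0" and a: "a \<le> n"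
  shows "(\<Sum>k<n. (\<Sum>i<n+1. v i * of_real (helmert (k+1) i)) * of_real (helmert (k+1) a)) = v a"
proof -
  have "(\<Sum>k<n. (\<Sum>i<n+1. v i * of_real (helmert (k+1) i)) * of_real (helmert (k+1) a))
      = (\<Sum>k<n. \<Sum>i<n+1. v i * of_real (helmert (k+1) i * helmert (k+1) a))"
    by (simp add: sum_distrib_right mult.assoc distrib_right)
  also have "\<dots> = (\<Sum>i<n+1. v i * of_real (\<Sum>k<n. helmert (k+1) i * helmert (k+1) a))"
    by (subst sum.swap) (simp add: sum_distrib_left)
  also have "\<dots> = (\<Sum>i<n+1. (if i = a then v i else 0) - v i * of_real (1 / (real n + 1)))"
  proof (rule sum.cong[OF refl])
    fix i assume "i \<in> {..<n+1}"
    then have hc: "(\<Sum>k<n. helmert (k+1) i * helmert (k+1) a) = (if i = a then 1 else 0) - 1 / (real n + 1)"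
      using a by (intro helmert_complete) auto
    then show "v i * of_real (\<Sum>k<n. helmert (k+1) i * helmert (k+1) a)
        = (if i = a then v i else 0) - v i * of_real (1 / (real n + 1))"
      unfolding hc by (simp add: algebra_simps)
  qed
  also have "\<dots> = (\<Sum>i<n+1. if i = a then v i else 0) - (\<Sum>i<n+1. v i) * of_real (1 / (real n + 1))"
    by (simp only: sum_subtractf sum_distrib_right)
  also have "\<dots> = v a" using s a by simp
  finally show ?thesis .
qed

definition helmert_mat :: "nat \<Rightarrow> cmat" where
  "helmert_mat k = diagm (\<lambda>i. of_real (helmert k i))"

lemma msc_in_sl: "A \<in> sl (n+1) \<Longrightarrow> msc c A \<in> sl (n+1)"
  using madd_msc_in_sl[of A n A c 0] by (simp add: madd_def msc_def)

lemma helmert_mat_in_sl: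
  assumes "1 \<le> k" "k \<le> n"
  shows "helmert_mat k \<in> sl (n+1)"
proof -
  have "(\<Sum>i<n+1. helmert_mat k i i) = of_real (\<Sum>i<n+1. helmert k i)"
    unfolding helmert_mat_def diagm_def by simp
  also have "\<dots> = 0" using sum_helmert[of k "n+1"] assms by simp
  finally show ?thesis
    unfolding sl_def mat_space_def helmert_mat_def diagm_def using assms by (auto simp: helmert_zero)
qed

lemma emat_in_sl: "p < n+1 \<Longrightarrow> q < n+1 \<Longrightarrow> p \<noteq> q \<Longrightarrow> emat p q \<in> sl (n+1)"
  unfolding sl_def mat_space_def emat_def by (auto intro!: sum.neutral)

lemma tr_top_helmert_mat: "tr_top n (helmert_mat k) = of_real (\<Sum>i<n. helmert k i)"
  unfolding tr_top_def helmert_mat_def diagm_def by simp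

lemma frob_top_helmert_mat: "frob_top n (helmert_mat k) (helmert_mat l) = of_real (\<Sum>i<n. helmert k i * helmert l i)"
  unfolding frob_top_def helmert_mat_def diagm_def by (simp add: if_distrib[of "\<lambda>u. u * _"] sum.delta cong: if_cong)

lemma frob_s_helmert_mat: "frob_s n (helmert_mat k) W = 0"
  unfolding frob_s_def helmert_mat_def diagm_def by simp

lemma gcoord_emat_helmert_mat:
  assumes "p < n+1" "q < n+1" "p \<noteq> q"
  shows "gcoord n x y z (emat p q) (helmert_mat k) = 0"
  using assms unfolding gcoord_emat[OF assms(1,2)] by (auto simp: helmert_mat_def diagm_def)

lemma gcoord_helmert_mat_emat:
  assumes "p < n+1" "q < n+1" "p \<noteq> q"
  shows "gcoord n x y z (helmert_mat k) (emat p q) = 0"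
  by (subst gcoord_herm) (simp add: gcoord_emat_helmert_mat[OF assms])

lemma sum_helmert_top:
  assumes "m \<le> n"
  shows "(\<Sum>i<n. helmert m i) = (if m = n then real n / sqrt (real n * (real n + 1)) else 0)"
  using assms sum_helmert[of m n] by (auto simp: helmert_def)

lemma sum_helmert_helmert_top:
  assumes n: "n \<ge> 1" and k: "1 \<le> k" "k \<le> n" and l: "l \<le> n"
  shows "(\<Sum>i<n. helmert k i * helmert l i) = (if k = l then (if k < n then 1 else 1 / (real n + 1)) else 0)"
proof -
  have hn: "helmert n i = 1 / sqrt (real n * (real n + 1))" if "i < n" for i
    using that unfolding helmert_def by simp
  have mixed: "(\<Sum>i<n. helmert m i * helmert n i) = 0" if "m < n" for m
    using sum_helmert[OF that] by (simp add: hn sum_divide_distrib[symmetric])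
  have last: "(\<Sum>i<n. helmert n i * helmert n i) = 1 / (real n + 1)"
    using n by (simp add: hn)
  show ?thesis
    using k l sum_helmert_helmert[of k n l] mixed[of k] mixed[of l] last
    by (cases "k < n"; cases "l < n") (auto simp: mult.commute)
qed

lemma gcoord_helmert_mat:
  assumes n: "n \<ge> 1" and k: "1 \<le> k" "k \<le> n" and l: "1 \<le> l" "l \<le> n" and y: "y > 0"
  shows "gcoord n x y z (helmert_mat k) (helmert_mat l) = (if k = l then of_real (1 / (if k < n then x else y)) else 0)"
proof -
  define c where "c = sqrt (real n * (real n + 1))"
  have c: "c * c = real n * (real n + 1)" unfolding c_def by simp
  have "gcoord n x y z (helmert_mat k) (helmert_mat l)
      = of_real ((1/x) * ((\<Sum>i<n. helmert k i * helmert l i) - (\<Sum>i<n. helmert k i) * (\<Sum>i<n. helmert l i) / real n)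
          + (real n + 1) / (real n * y) * ((\<Sum>i<n. helmert k i) * (\<Sum>i<n. helmert l i)))"
    unfolding gcoord_def frob_top_helmert_mat tr_top_helmert_mat frob_s_helmert_mat by simp
  also have "\<dots> = (if k = l then of_real (1 / (if k < n then x else y)) else 0)"
  proof (cases "k = n \<and> l = n")
    case True
    have npos: "real n > 0" using n by simp
    have "real n / c * (real n / c) = real n * real n / (c * c)" by simp
    also have "\<dots> = real n / (real n + 1)" unfolding c using npos by simp
    finally have sq: "real n / c * (real n / c) = real n / (real n + 1)" .
    have "real n / c * (real n / c) / real n = 1 / (real n + 1)"
      and "(real n + 1) / (real n * y) * (real n / c * (real n / c)) = 1 / y"
      unfolding sq using npos y by (simp_all add: divide_simps)
    then show ?thesis
      using True n unfolding sum_helmert_top[OF k(2)] sum_helmert_top[OF l(2)] sum_helmert_helmert_top[OF n k l(2)]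
      by (simp add: c_def[symmetric])
  next
    case False
    then show ?thesis
      using k l unfolding sum_helmert_top[OF k(2)] sum_helmert_top[OF l(2)] sum_helmert_helmert_top[OF n k l(2)]
      by auto
  qed
  finally show ?thesis .
qed

definition basis_idxs :: "nat \<Rightarrow> (nat \<times> nat) set" where
  "basis_idxs n = {..<n+1} \<times> {..<n+1} - {(n, n)}"

definition basis_dir :: "nat \<Rightarrow> nat \<Rightarrow> cmat" where
  "basis_dir p q = (if p = q then helmert_mat (p+1) else emat p q)"

definition basis_weight :: "nat \<Rightarrow> real \<Rightarrow> real \<Rightarrow> real \<Rightarrow> nat \<Rightarrow> nat \<Rightarrow> real" where
  "basis_weight n x y z p q = (if p = q then (if p + 1 < n then x else y) else if p < n \<and> q < n then x else z)"

definition basis_mat :: "nat \<Rightarrow> real \<Rightarrow> real \<Rightarrow> real \<Rightarrow> nat \<times> nat \<Rightarrow> cmat" where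
  "basis_mat n x y z a = msc (of_real (sqrt (basis_weight n x y z (fst a) (snd a)))) (basis_dir (fst a) (snd a))"

lemma basis_idxs_iff: "(p, q) \<in> basis_idxs n \<longleftrightarrow> p < n+1 \<and> q < n+1 \<and> \<not> (p = n \<and> q = n)"
  unfolding basis_idxs_def by auto

lemma basis_mat_in_sl:
  assumes "a \<in> basis_idxs n"
  shows "basis_mat n x y z a \<in> sl (n+1)"
proof -
  obtain p q where a: "a = (p, q)" and pq: "p < n+1" "q < n+1" "\<not> (p = n \<and> q = n)"
    using assms by (cases a) (auto simp: basis_idxs_iff)
  then have "basis_dir p q \<in> sl (n+1)"
    unfolding basis_dir_def using helmert_mat_in_sl[of "p+1" n] emat_in_sl[of p n q] by auto
  then show ?thesis unfolding basis_mat_def a by (simp only: fst_conv snd_conv msc_in_sl)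
qed

lemma gcoord_emat_emat:
  assumes "p < n+1" "q < n+1" "r < n+1" "s < n+1" "p \<noteq> q" "r \<noteq> s"
  shows "gcoord n x y z (emat p q) (emat r s)
    = (if p = r \<and> q = s then of_real (1 / (if p < n \<and> q < n then x else z)) else 0)"
  using assms unfolding gcoord_emat[OF assms(1,2)] by (auto simp: tr_top_emat emat_def)

lemma gcoord_basis_dir:
  assumes n: "n \<ge> 1" and y: "y > 0" and pq: "(p, q) \<in> basis_idxs n" and rs: "(r, s) \<in> basis_idxs n"
  shows "gcoord n x y z (basis_dir p q) (basis_dir r s)
    = (if p = r \<and> q = s then of_real (1 / basis_weight n x y z p q) else 0)"
proof -
  have pq': "p < n+1" "q < n+1" "\<not> (p = n \<and> q = n)" and rs': "r < n+1" "s < n+1" "\<not> (r = n \<and> s = n)"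
    using pq rs unfolding basis_idxs_iff by auto
  show ?thesis
  proof (cases "p = q"; cases "r = s")
    assume "p = q" "r = s"
    then show ?thesis
      using pq' rs' gcoord_helmert_mat[OF n _ _ _ _ y, of "p+1" "r+1"]
      unfolding basis_dir_def basis_weight_def by simp
  next
    assume "p = q" "r \<noteq> s"
    then show ?thesis
      using gcoord_helmert_mat_emat[OF rs'(1,2)] unfolding basis_dir_def by simp
  next
    assume "p \<noteq> q" "r = s"
    then show ?thesis
      using gcoord_emat_helmert_mat[OF pq'(1,2)] unfolding basis_dir_def by simp
  next
    assume "p \<noteq> q" "r \<noteq> s"
    then show ?thesis
      using gcoord_emat_emat[OF pq'(1,2) rs'(1,2)] unfolding basis_dir_def basis_weight_def by simp
  qed
qed

lemma gcoord_msc_right: "gcoord n x y z W (msc b B) = cnj b * gcoord n x y z W B"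
  by (subst gcoord_herm) (simp add: gcoord_msc gcoord_herm[of n x y z B W])

lemma gcoord_basis_mat:
  assumes n: "n \<ge> 1" and x: "x > 0" and y: "y > 0" and z: "z > 0"
    and a: "a \<in> basis_idxs n" and b: "b \<in> basis_idxs n"
  shows "gcoord n x y z (basis_mat n x y z a) (basis_mat n x y z b) = (if a = b then 1 else 0)"
proof -
  obtain p q r s where ab: "a = (p, q)" "b = (r, s)" by fastforce
  define w where "w = basis_weight n x y z p q"
  have "w > 0" using x y z unfolding w_def basis_weight_def by auto
  then have "of_real (sqrt w) * of_real (sqrt w) * of_real (1 / w) = (1::complex)"
    by (simp flip: of_real_mult)
  then show ?thesis
    using gcoord_basis_dir[OF n y, of p q r s] a b unfolding ab basis_mat_def w_def
    by (auto simp: gcoord_msc gcoord_msc_right mult.assoc)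
qed

lemma sl_entry_expansion:
  assumes X: "X \<in> sl (n+1)"
  shows "(\<Sum>p<n+1. \<Sum>q<n+1. if p = q
      then (if p < n \<and> r = t then (\<Sum>i<n+1. X i i * of_real (helmert (p+1) i)) * of_real (helmert (p+1) r) else 0)
      else (if r = p \<and> t = q then X p q else 0)) = X r t"
    (is "(\<Sum>p<n+1. \<Sum>q<n+1. ?F p q) = _")
proof (cases "r = t")
  case False
  then have "(\<Sum>p<n+1. \<Sum>q<n+1. ?F p q) = (\<Sum>p<n+1. \<Sum>q<n+1. if r = p then (if t = q then X r t else 0) else 0)"
    by (intro sum.cong refl) auto
  also have "\<dots> = (if r \<in> {..<n+1} then if t \<in> {..<n+1} then X r t else 0 else 0)"
    by (simp only: sum_if_const_cond sum.delta' finite_lessThan)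
  also have "\<dots> = X r t" using sl_outside[OF X, of r t] by auto
  finally show ?thesis .
next
  case True
  define D where "D p = (if p < n then (\<Sum>i<n+1. X i i * of_real (helmert (p+1) i)) * of_real (helmert (p+1) r) else 0)" for p
  have "?F p q = (if q = p then D p else 0)" for p q
    using True unfolding D_def by auto
  then have "(\<Sum>p<n+1. \<Sum>q<n+1. ?F p q) = (\<Sum>p<n+1. D p)"
    by (simp only: sum.delta finite_lessThan) simp
  then have "(\<Sum>p<n+1. \<Sum>q<n+1. ?F p q)
      = (\<Sum>p<n+1. if p < n then (\<Sum>i<n+1. X i i * of_real (helmert (p+1) i)) * of_real (helmert (p+1) r) else 0)"
    unfolding D_def .
  also have "\<dots> = (\<Sum>p<n. (\<Sum>i<n+1. X i i * of_real (helmert (p+1) i)) * of_real (helmert (p+1) r))"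
    by simp
  also have "\<dots> = X r t"
  proof (cases "r \<le> n")
    case True
    have "(\<Sum>i<n+1. X i i) = 0" using X unfolding sl_def by simp
    then show ?thesis using helmert_expansion[OF _ True] \<open>r = t\<close> by simp
  next
    case False
    then show ?thesis using sl_outside[OF X, of r t] \<open>r = t\<close> by (simp add: helmert_zero)
  qed
  finally show ?thesis .
qed

lemma basis_mat_span:
  assumes x: "x > 0" and y: "y > 0" and z: "z > 0" and X: "X \<in> sl (n+1)"
  shows "\<exists>c. X = (\<lambda>r t. \<Sum>a\<in>basis_idxs n. c a * basis_mat n x y z a r t)"
proof -
  define hc where "hc p = (\<Sum>i<n+1. X i i * of_real (helmert (p+1) i))" for p
  define c where "c a = of_real (1 / sqrt (basis_weight n x y z (fst a) (snd a)))
      * (if fst a = snd a then hc (fst a) else X (fst a) (snd a))" for a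
  define F where "F p q r t = (if p = q then (if p < n \<and> r = t then hc p * of_real (helmert (p+1) r) else 0)
      else (if r = p \<and> t = q then X p q else 0))" for p q r t
  have coeff_term: "c (p, q) * basis_mat n x y z (p, q) r t = F p q r t"
    if "(p, q) \<in> basis_idxs n" for p q r t
  proof -
    define w where "w = basis_weight n x y z p q"
    have "w > 0" using x y z unfolding w_def basis_weight_def by auto
    have "p = q \<Longrightarrow> p < n" using that unfolding basis_idxs_iff by auto
    have "c (p, q) * basis_mat n x y z (p, q) r t
        = (if p = q then hc p else X p q) * basis_dir p q r t"
      unfolding c_def basis_mat_def msc_def w_def[symmetric] fst_conv snd_conv
      using \<open>w > 0\<close> by simp
    also have "\<dots> = F p q r t"
      using \<open>p = q \<Longrightarrow> p < n\<close> unfolding F_def basis_dir_def helmert_mat_def diagm_def emat_def by auto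
    finally show ?thesis .
  qed
  have "X r t = (\<Sum>a\<in>basis_idxs n. c a * basis_mat n x y z a r t)" for r t
  proof -
    have "(\<Sum>a\<in>basis_idxs n. c a * basis_mat n x y z a r t) = (\<Sum>a\<in>basis_idxs n. F (fst a) (snd a) r t)"
      using coeff_term by (intro sum.cong) auto
    also have "\<dots> = (\<Sum>a\<in>{..<n+1} \<times> {..<n+1}. F (fst a) (snd a) r t)"
      by (rule sum.mono_neutral_left) (auto simp: basis_idxs_def F_def)
    also have "\<dots> = (\<Sum>p<n+1. \<Sum>q<n+1. F p q r t)"
      by (simp only: sum.cartesian_product case_prod_unfold)
    also have "\<dots> = X r t"
      unfolding F_def hc_def by (rule sl_entry_expansion[OF X])
    finally show ?thesis by simp
  qed
  then show ?thesis by blast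
qed

lemma sl_unitary_basis_exists:
  assumes n: "n \<ge> 1" and x: "x > 0" and y: "y > 0" and z: "z > 0"
  shows "\<exists>e d. unitary_basis (sl (n+1)) (gxyz n x y z) e d"
proof (rule unitary_basis_of_family)
  show "finite (basis_idxs n)" unfolding basis_idxs_def by simp
  show "\<forall>a\<in>basis_idxs n. basis_mat n x y z a \<in> sl (n+1)"
    using basis_mat_in_sl by blast
  show "\<forall>a\<in>basis_idxs n. \<forall>b\<in>basis_idxs n.
      gxyz n x y z (basis_mat n x y z a) (basis_mat n x y z b) = (if a = b then 1 else 0)"
    using gxyz_eq_gcoord[OF n basis_mat_in_sl basis_mat_in_sl] gcoord_basis_mat[OF n x y z] by simp
  show "\<forall>X\<in>sl (n+1). \<exists>c. X = (\<lambda>r t. \<Sum>a\<in>basis_idxs n. c a * basis_mat n x y z a r t)"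
    using basis_mat_span[OF x y z] by blast
qed

section \<open>The torsion-twisted Chern--Ricci operator\<close>

lemma comm_in_sl:
  assumes u: "u \<in> sl (n+1)" and v: "v \<in> sl (n+1)"
  shows "comm (n+1) u v \<in> sl (n+1)"
proof -
  have "(\<Sum>i<n+1. comm (n+1) u v i i) = (\<Sum>i<n+1. \<Sum>k<n+1. u i k * v k i) - (\<Sum>i<n+1. \<Sum>k<n+1. v i k * u k i)"
    unfolding comm_def by (simp only: sum_subtractf)
  also have "(\<Sum>i<n+1. \<Sum>k<n+1. v i k * u k i) = (\<Sum>i<n+1. \<Sum>k<n+1. u i k * v k i)"
    by (subst sum.swap) (simp only: mult.commute)
  finally have "(\<Sum>i<n+1. comm (n+1) u v i i) = 0" by simp
  moreover have "comm (n+1) u v \<in> mat_space (n+1)"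
    using u v unfolding sl_def mat_space_def comm_def by auto
  ultimately show ?thesis unfolding sl_def by simp
qed

lemma gxyz_msc: "gxyz n x y z (msc c M) W = c * gxyz n x y z M W"
proof -
  have "prI n (msc c M) = msc c (prI n M)"
    unfolding prI_def frob_msc by (simp add: msc_def mult.assoc)
  then have "sigma n x y z (msc c M) = msc c (sigma n x y z M)"
    unfolding sigma_def block_op_def prSl_def madd_def msc_def prS_def by (intro ext) (simp add: algebra_simps)
  then show ?thesis unfolding gxyz_def by (simp add: frob_msc)
qed

lemma gxyz_comm_anti: "gxyz n x y z (comm N u v) X = - gxyz n x y z (comm N v u) X"
  by (subst comm_anti) (simp add: gxyz_msc)

lemma gxyz_comm_linear:
  assumes n: "n \<ge> 1" and u: "u \<in> sl (n+1)" and X: "X \<in> sl (n+1)"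
  shows "linear_on (sl (n+1)) (\<lambda>v. gxyz n x y z (comm (n+1) u v) X)"
    and "linear_on (sl (n+1)) (\<lambda>v. gxyz n x y z (comm (n+1) v u) X)"
proof -
  have lin: "gxyz n x y z (madd (msc a A) (msc b B)) X = a * gxyz n x y z A X + b * gxyz n x y z B X"
    if "A \<in> sl (n+1)" "B \<in> sl (n+1)" for A B a b
    using gxyz_hermitian[OF n] X that unfolding hermitian_form_on_def linear_on_def by blast
  show "linear_on (sl (n+1)) (\<lambda>v. gxyz n x y z (comm (n+1) u v) X)"
    unfolding linear_on_def using lin comm_in_sl[OF u]
    by (simp add: comm_madd_r comm_msc_r)
  show "linear_on (sl (n+1)) (\<lambda>v. gxyz n x y z (comm (n+1) v u) X)"
    unfolding linear_on_def using lin comm_in_sl[OF _ u]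
    by (simp add: comm_madd_l comm_msc_l)
qed

definition ttcr_block :: "nat \<Rightarrow> real \<Rightarrow> real \<Rightarrow> real \<Rightarrow> cmat \<Rightarrow> cmat" where
  "ttcr_block n x y z X = (if X \<in> sl (n+1)
     then block_op n (real n * x + z\<^sup>2 / x) ((real n + 1) * z\<^sup>2 / y) ((real n + 1) / real n * ((real n - 1) * x + y)) X
     else mzero)"

lemma ttcr_block_quadratic:
  assumes n: "n \<ge> 1" and x: "x > 0" and y: "y > 0" and z: "z > 0"
    and ub: "unitary_basis (sl (n+1)) (gxyz n x y z) e d" and X: "X \<in> sl (n+1)"
  shows "gxyz n x y z (ttcr_block n x y z X) X
    = of_real (\<Sum>i<d. \<Sum>j\<in>{i<..<d}. (cmod (gxyz n x y z (comm (n+1) (e i) (e j)) X))\<^sup>2)"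
proof -
  let ?b = "fvec n x y z"
  have "(\<Sum>i<d. \<Sum>j\<in>{i<..<d}. (cmod (gxyz n x y z (comm (n+1) (e i) (e j)) X))\<^sup>2)
      = (\<Sum>k\<in>frame_idxs n. \<Sum>l\<in>frame_idxs n. (cmod (gxyz n x y z (comm (n+1) (?b k) (?b l)) X))\<^sup>2) / 2"
    using gxyz_comm_linear[OF n _ X]
    by (intro unitary_basis_bracket_sum[OF sl_subspace gxyz_hermitian[OF n] ub parseval_frame_fvec[OF n x y z]])
       (auto intro: gxyz_comm_anti)
  also have "(\<Sum>k\<in>frame_idxs n. \<Sum>l\<in>frame_idxs n. (cmod (gxyz n x y z (comm (n+1) (?b k) (?b l)) X))\<^sup>2)
      = (\<Sum>k\<in>frame_idxs n. \<Sum>l\<in>frame_idxs n. (cmod (gcoord n x y z (comm (n+1) (?b k) (?b l)) X))\<^sup>2)"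
    using gxyz_eq_gcoord[OF n comm_in_sl[OF fvec_in_sl[OF n] fvec_in_sl[OF n]] X]
    by (intro sum.cong refl) (simp del: fvec.simps)
  finally have "(of_real (\<Sum>i<d. \<Sum>j\<in>{i<..<d}. (cmod (gxyz n x y z (comm (n+1) (e i) (e j)) X))\<^sup>2) :: complex)
      = of_real (\<Sum>k\<in>frame_idxs n. \<Sum>l\<in>frame_idxs n. (cmod (gcoord n x y z (comm (n+1) (?b k) (?b l)) X))\<^sup>2) / 2"
    by (simp only: of_real_divide of_real_numeral)
  also have "\<dots> = (\<Sum>k\<in>frame_idxs n. \<Sum>l\<in>frame_idxs n. gcoord n x y z (comm (n+1) (?b k) (?b l)) X
            * cnj (gcoord n x y z (comm (n+1) (?b k) (?b l)) X)) / 2"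
    by (simp only: of_real_sum complex_norm_square)
  also have "\<dots> = gcoord n x y z (ttcr_block n x y z X) X"
    unfolding bracket_sum_frame_block[OF n x y z X] ttcr_block_def using X by simp
  also have "\<dots> = gxyz n x y z (ttcr_block n x y z X) X"
    unfolding ttcr_block_def using X gxyz_eq_gcoord[OF n block_in_sl[OF n X] X] by simp
  finally show ?thesis ..
qed

lemma ttcr_block_is_ttcr:
  assumes n: "n \<ge> 1" and x: "x > 0" and y: "y > 0" and z: "z > 0"
  shows "is_ttcr (sl (n+1)) (gxyz n x y z) (comm (n+1)) (ttcr_block n x y z)"
  unfolding is_ttcr_def
proof (intro conjI ballI allI impI)
  fix X assume X: "X \<in> sl (n+1)"
  show "ttcr_block n x y z X \<in> sl (n+1)"
    unfolding ttcr_block_def using X block_in_sl[OF n X] by simp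
next
  fix X Y :: cmat and a b :: complex assume X: "X \<in> sl (n+1)" and Y: "Y \<in> sl (n+1)"
  show "ttcr_block n x y z (madd (msc a X) (msc b Y)) = madd (msc a (ttcr_block n x y z X)) (msc b (ttcr_block n x y z Y))"
    unfolding ttcr_block_def using X Y madd_msc_in_sl[OF X Y] block_op_linear[OF n X Y] by simp
next
  fix X Y assume X: "X \<in> sl (n+1)" and Y: "Y \<in> sl (n+1)"
  show "gxyz n x y z (ttcr_block n x y z X) Y = gxyz n x y z X (ttcr_block n x y z Y)"
    unfolding ttcr_block_def
    using X Y gxyz_eq_gcoord[OF n block_in_sl[OF n X] Y] gxyz_eq_gcoord[OF n X block_in_sl[OF n Y]]
      gcoord_block_herm[OF n X Y] by simp
next
  fix e d X assume "unitary_basis (sl (n+1)) (gxyz n x y z) e d" and "X \<in> sl (n+1)"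
  then show "gxyz n x y z (ttcr_block n x y z X) X
      = of_real (\<Sum>i<d. \<Sum>j\<in>{i<..<d}. (cmod (gxyz n x y z (comm (n+1) (e i) (e j)) X))\<^sup>2)"
    by (rule ttcr_block_quadratic[OF n x y z])
qed

theorem lemma3p1:
  fixes n :: nat and x y z :: real
  assumes "n \<ge> 2" and "x > 0" and "y > 0" and "z > 0"
  shows "\<forall>X\<in>sl (n+1).
    ttcr (sl (n+1)) (gxyz n x y z) (comm (n+1)) X =
    block_op n (real n * x + z\<^sup>2 / x) ((real n + 1) * z\<^sup>2 / y)
               ((real n + 1) / real n * ((real n - 1) * x + y)) X"
proof -
  have n: "n \<ge> 1" using assms(1) by simp \<comment> \<open>the argument only needs n \<ge> 1\<close>
  note xyz = assms(2-4)
  obtain e d where ub: "unitary_basis (sl (n+1)) (gxyz n x y z) e d"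
    using sl_unitary_basis_exists[OF n xyz] by blast
  have "ttcr (sl (n+1)) (gxyz n x y z) (comm (n+1)) = ttcr_block n x y z"
    using ttcr_eqI[OF sl_subspace gxyz_hermitian[OF n] gxyz_pos_def[OF n xyz] ub ttcr_block_is_ttcr[OF n xyz]]
    by (simp add: ttcr_block_def)
  then show ?thesis by (simp add: ttcr_block_def)
qed

end
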